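(* Let $n,p,q\ge 1$, let $X\in\mathbb{R}^{n\times p}$ be deterministic, $B^*\in\mathbb{R}^{p\times q}$, $\sigma^*>0$, and $Y=XB^*+E$ where the entries of $E\in\mathbb{R}^{n\times q}$ are i.i.d. $\mathcal N(0,{\sigma^*}^2)$. Let $\mathcal S^*=\{j\in[p]: \|B^*_{j:}\|_2\neq 0\}$. Assume that $\Psi=\frac1n X^\top X$ satisfies $\Psi_{jj}=1$ for all $j\in[p]$ and $\max_{j'\neq j}|\Psi_{jj'}|\le \frac{1}{7\alpha s}$ for all $j\in[p]$, for some integer $s\ge 1$ with $|\mathcal S^*|\le s$ and some constant $\alpha>1$. Let $A>\sqrt2$ and $$\lambda=\frac{2\sqrt2}{\sqrt{nq}}\Big(1+A\sqrt{\tfrac{\log p}{q}}\Big),$$ and let $\eta>0$ satisfy $\lambda\|B^*\|_{2,1}\le \eta\sigma^*$. Let $\hat B$ be either (a) (multitask square-root Lasso) any minimizer over $B\in\mathbb{R}^{p\times q}$ of $\frac{1}{\sqrt{nq}}\|Y-XB\|_F+\lambda\|B\|_{2,1}$; or (b) (smoothed multitask square-root Lasso) for a parameter $\sigma_{\min}$ with $0<\sigma_{\min}\le \sigma^*/\sqrt2$, the $B$-component of any minimizer $(\hat B,\hat\sigma)$ over $B\in\mathbb{R}^{p\times q}$, $\sigma\ge\sigma_{\min}$ of $\frac{1}{2nq\sigma}\|Y-XB\|_F^2+\frac{\sigma}{2}+\lambda\|B\|_{2,1}$. Let $C=1+\frac{16}{7(\alpha-1)}$. Then, with probability at least $1-p^{1-A^2/2}-(1+e^2)e^{-nq/24}$,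 the following holds: $$\tfrac1q\|\hat B-B^*\|_{2,\infty}\le C(3+\eta)\lambda\sigma^*,$$ and moreover, if $\min_{j\in\mathcal S^*}\frac1q\|B^*_{j:}\|_2>2C(3+\eta)\lambda\sigma^*$, then the set $\hat{\mathcal S}=\{j\in[p]: \frac1q\|\hat B_{j:}\|_2> C(3+\eta)\lambda\sigma^*\}$ satisfies $\hat{\mathcal S}=\mathcal S^*$.
   Context: For $M\in\mathbb{R}^{p\times q}$, $M_{j:}$ denotes its $j$-th row, $\|M\|_{2,1}=\sum_j\|M_{j:}\|_2$ and $\|M\|_{2,\infty}=\max_j\|M_{j:}\|_2$; $\|\cdot\|_F$ is the Frobenius norm; $[p]=\{1,\dots,p\}$. *)

theory Defs
  imports "HOL-Probability.Probability"
begin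

text \<open>Matrices are represented as functions nat => nat => real; only the entries
  with indices in range (rows < number of rows, columns < number of columns) matter.\<close>

definition row_norm :: "nat \<Rightarrow> (nat \<Rightarrow> nat \<Rightarrow> real) \<Rightarrow> nat \<Rightarrow> real" where
  "row_norm q M j = sqrt (\<Sum>k<q. (M j k)\<^sup>2)"

definition norm21 :: "nat \<Rightarrow> nat \<Rightarrow> (nat \<Rightarrow> nat \<Rightarrow> real) \<Rightarrow> real" where
  "norm21 p q M = (\<Sum>j<p. row_norm q M j)"

definition norm2inf :: "nat \<Rightarrow> nat \<Rightarrow> (nat \<Rightarrow> nat \<Rightarrow> real) \<Rightarrow> real" where
  "norm2inf p q M = Max ((\<lambda>j. row_norm q M j) ` {..<p})"

definition fro :: "nat \<Rightarrow> nat \<Rightarrow> (nat \<Rightarrow> nat \<Rightarrow> real) \<Rightarrow> real" where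
  "fro n q M = sqrt (\<Sum>i<n. \<Sum>k<q. (M i k)\<^sup>2)"

definition matmul :: "nat \<Rightarrow> (nat \<Rightarrow> nat \<Rightarrow> real) \<Rightarrow> (nat \<Rightarrow> nat \<Rightarrow> real) \<Rightarrow> (nat \<Rightarrow> nat \<Rightarrow> real)" where
  "matmul p X B = (\<lambda>i k. \<Sum>j<p. X i j * B j k)"

definition msub :: "(nat \<Rightarrow> nat \<Rightarrow> real) \<Rightarrow> (nat \<Rightarrow> nat \<Rightarrow> real) \<Rightarrow> (nat \<Rightarrow> nat \<Rightarrow> real)" where
  "msub M N = (\<lambda>i k. M i k - N i k)"

definition gram :: "nat \<Rightarrow> (nat \<Rightarrow> nat \<Rightarrow> real) \<Rightarrow> nat \<Rightarrow> nat \<Rightarrow> real" where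
  "gram n X j j' = (1 / real n) * (\<Sum>i<n. X i j * X i j')"

definition obs :: "nat \<Rightarrow> (nat \<Rightarrow> nat \<Rightarrow> real) \<Rightarrow> (nat \<Rightarrow> nat \<Rightarrow> real) \<Rightarrow> (nat \<times> nat \<Rightarrow> real)
    \<Rightarrow> (nat \<Rightarrow> nat \<Rightarrow> real)" where
  "obs p X Bs E = (\<lambda>i k. (\<Sum>j<p. X i j * Bs j k) + E (i, k))"

definition sqrt_lasso_obj :: "nat \<Rightarrow> nat \<Rightarrow> nat \<Rightarrow> (nat \<Rightarrow> nat \<Rightarrow> real) \<Rightarrow> (nat \<Rightarrow> nat \<Rightarrow> real)
    \<Rightarrow> real \<Rightarrow> (nat \<Rightarrow> nat \<Rightarrow> real) \<Rightarrow> real" where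
  "sqrt_lasso_obj n p q X Y lam B =
     fro n q (msub Y (matmul p X B)) / sqrt (real n * real q) + lam * norm21 p q B"

definition smooth_obj :: "nat \<Rightarrow> nat \<Rightarrow> nat \<Rightarrow> (nat \<Rightarrow> nat \<Rightarrow> real) \<Rightarrow> (nat \<Rightarrow> nat \<Rightarrow> real)
    \<Rightarrow> real \<Rightarrow> (nat \<Rightarrow> nat \<Rightarrow> real) \<Rightarrow> real \<Rightarrow> real" where
  "smooth_obj n p q X Y lam B \<sigma> =
     (fro n q (msub Y (matmul p X B)))\<^sup>2 / (2 * real n * real q * \<sigma>) + \<sigma> / 2 + lam * norm21 p q B"

definition noise_measure :: "nat \<Rightarrow> nat \<Rightarrow> real \<Rightarrow> (nat \<times> nat \<Rightarrow> real) measure" where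
  "noise_measure n q \<sigma> = PiM ({..<n} \<times> {..<q}) (\<lambda>_. density lborel (normal_density 0 \<sigma>))"

definition good_estimate :: "nat \<Rightarrow> nat \<Rightarrow> (nat \<Rightarrow> nat \<Rightarrow> real) \<Rightarrow> (nat \<Rightarrow> nat \<Rightarrow> real) \<Rightarrow> real \<Rightarrow> bool" where
  "good_estimate p q Bs Bh t \<longleftrightarrow>
     norm2inf p q (msub Bh Bs) / real q \<le> t \<and>
     ((\<forall>j<p. row_norm q Bs j \<noteq> 0 \<longrightarrow> row_norm q Bs j / real q > 2 * t) \<longrightarrow>
       {j. j < p \<and> row_norm q Bh j / real q > t} = {j. j < p \<and> row_norm q Bs j \<noteq> 0})"

end

theory Submission
  imports Defs
begin

text \<open>
  On the event \<open>noise_event\<close> every column correlation |X_j^T E| is at most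
  nq \<lambda> \<sigma> / (2 sqrt 2) and |E|_F^2 / (nq) lies between \<sigma>^2/2 and 4 \<sigma>^2; Chernoff bounds for
  Gaussian quadratic forms and a union bound over the p columns give it the stated probability.
  On this event both estimators satisfy the cone condition |B|_{2,1} \<le> |B*|_{2,1} + |B - B*|_{2,1} / 2
  (the smoothed objective dominates the square-root Lasso objective, with equality at the
  optimal noise level), so |B - B*|_{2,1} \<le> 4 s |B - B*|_{2,\<infinity>}. Minimality along perturbations
  of a single row bounds the residual correlations |X_j^T (Y - X B)| by nq \<lambda> (2 + \<eta>) \<sigma>.
  As \<Psi>_jj = 1, row j of B - B* equals row j of \<Psi> (B - B*) = X^T (E - (Y - X B)) / n up to
  (4 / (7 \<alpha>)) |B - B*|_{2,\<infinity>}; absorbing this term gives the row-wise bound with constant C,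
  and support recovery follows from the triangle inequality.
\<close>

section \<open>Gaussian quadratic forms\<close>

abbreviation gaussian :: "real \<Rightarrow> real measure" where
  "gaussian \<sigma> \<equiv> density lborel (normal_density 0 \<sigma>)"

lemma sets_gaussian: "sets (gaussian \<sigma>) = sets borel"
  by simp

lemma normal_density_mult_exp_square:
  fixes \<sigma> s :: real
  assumes "\<sigma> > 0" "2 * s * \<sigma>\<^sup>2 < 1"
  defines "\<sigma>' \<equiv> \<sigma> / sqrt (1 - 2 * s * \<sigma>\<^sup>2)"
  shows "normal_density 0 \<sigma> x * exp (s * x\<^sup>2) = (\<sigma>' / \<sigma>) * normal_density 0 \<sigma>' x"
proof -
  define c where "c = 1 - 2 * s * \<sigma>\<^sup>2"
  have c: "c > 0" using assms c_def by simp
  have \<sigma>'_sq: "\<sigma>'\<^sup>2 = \<sigma>\<^sup>2 / c" unfolding \<sigma>'_def c_def[symmetric] using c by (simp add: power_divide)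
  have \<sigma>': "\<sigma>' > 0" unfolding \<sigma>'_def using assms c c_def by simp
  have density: "normal_density 0 \<tau> x = exp (- x\<^sup>2 / (2 * \<tau>\<^sup>2)) / (sqrt (2 * pi) * \<tau>)" if "\<tau> > 0" for \<tau>
    using that unfolding normal_density_def by (simp add: real_sqrt_mult)
  have exponent: "- x\<^sup>2 / (2 * \<sigma>\<^sup>2) + s * x\<^sup>2 = - x\<^sup>2 / (2 * \<sigma>'\<^sup>2)"
    unfolding \<sigma>'_sq c_def using assms by (simp add: field_simps)
  have "normal_density 0 \<sigma> x * exp (s * x\<^sup>2) = exp (- x\<^sup>2 / (2 * \<sigma>\<^sup>2) + s * x\<^sup>2) / (sqrt (2 * pi) * \<sigma>)"
    using assms by (simp add: density mult_exp_exp)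
  also have "\<dots> = (\<sigma>' / \<sigma>) * (exp (- x\<^sup>2 / (2 * \<sigma>'\<^sup>2)) / (sqrt (2 * pi) * \<sigma>'))"
    unfolding exponent using \<sigma>' assms by (simp add: field_simps)
  also have "\<dots> = (\<sigma>' / \<sigma>) * normal_density 0 \<sigma>' x"
    using \<sigma>' by (simp add: density)
  finally show ?thesis .
qed

lemma nn_integral_exp_square_gaussian:
  fixes \<sigma> s :: real
  assumes "\<sigma> > 0" "2 * s * \<sigma>\<^sup>2 < 1"
  shows "(\<integral>\<^sup>+x. ennreal (exp (s * x\<^sup>2)) \<partial>gaussian \<sigma>) = ennreal ((1 - 2 * s * \<sigma>\<^sup>2) powr (-1/2))"
proof -
  define \<sigma>' where "\<sigma>' = \<sigma> / sqrt (1 - 2 * s * \<sigma>\<^sup>2)"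
  have c: "1 - 2 * s * \<sigma>\<^sup>2 > 0" using assms by simp
  have \<sigma>': "\<sigma>' > 0" unfolding \<sigma>'_def using assms c by simp
  have "(\<integral>\<^sup>+x. ennreal (exp (s * x\<^sup>2)) \<partial>gaussian \<sigma>)
      = (\<integral>\<^sup>+x. ennreal (normal_density 0 \<sigma> x) * ennreal (exp (s * x\<^sup>2)) \<partial>lborel)"
    by (subst nn_integral_density) auto
  also have "\<dots> = (\<integral>\<^sup>+x. ennreal (\<sigma>' / \<sigma>) * ennreal (normal_density 0 \<sigma>' x) \<partial>lborel)"
    using normal_density_mult_exp_square[OF assms] \<sigma>' assms
    by (intro nn_integral_cong) (simp add: \<sigma>'_def ennreal_mult'[symmetric])
  also have "\<dots> = ennreal (\<sigma>' / \<sigma>) * (\<integral>\<^sup>+x. ennreal (normal_density 0 \<sigma>' x) \<partial>lborel)"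
    by (subst nn_integral_cmult) auto
  also have "(\<integral>\<^sup>+x. ennreal (normal_density 0 \<sigma>' x) \<partial>lborel) = 1"
    using \<sigma>' by (subst nn_integral_eq_integral) (auto simp: integrable_normal_density integral_normal_density)
  also have "\<sigma>' / \<sigma> = (1 - 2 * s * \<sigma>\<^sup>2) powr (-1/2)"
    using assms c unfolding \<sigma>'_def
    by (simp add: powr_minus_divide powr_half_sqrt[symmetric] divide_simps powr_minus)
  finally show ?thesis by simp
qed

lemma borel_measurable_PiM_component:
  fixes N :: "real measure"
  assumes "sets N = sets borel"
  shows "(\<lambda>\<omega>. \<omega> x) \<in> borel_measurable (PiM I (\<lambda>_. N))"
proof (cases "x \<in> I")
  case True
  have "(\<lambda>\<omega>. \<omega> x) \<in> measurable (PiM I (\<lambda>_. N)) N"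
    using True by (rule measurable_component_singleton)
  then show ?thesis
    unfolding measurable_cong_sets[OF refl assms] .
next
  case False
  have "(\<lambda>\<omega>. undefined::real) \<in> borel_measurable (PiM I (\<lambda>_. N))"
    by simp
  then show ?thesis
    by (rule measurable_cong[THEN iffD1, rotated]) (use False in \<open>auto simp: space_PiM PiE_def extensional_def\<close>)
qed

lemma gaussian_component_measurable [measurable]:
  "(\<lambda>\<omega>. \<omega> x) \<in> borel_measurable (PiM I (\<lambda>_. gaussian \<sigma>))"
  using borel_measurable_PiM_component[OF sets_gaussian] .

lemma distr_PiM_component_borel:
  fixes N :: "real measure"
  assumes "prob_space N" "sets N = sets borel" "x \<in> I"
  shows "distr (PiM I (\<lambda>_. N)) borel (\<lambda>\<omega>. \<omega> x) = N"
proof -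
  have "distr (PiM I (\<lambda>_. N)) borel (\<lambda>\<omega>. \<omega> x) = distr (PiM I (\<lambda>_. N)) N (\<lambda>\<omega>. \<omega> x)"
    using assms(2) by (rule distr_cong[OF refl, symmetric]) simp
  also have "\<dots> = N"
    using distr_PiM_component[of I "\<lambda>_. N" x] assms(1,3) by simp
  finally show ?thesis .
qed

lemma indep_vars_PiM_components:
  fixes N :: "real measure"
  assumes "inj_on f J" "f ` J \<subseteq> I" "J \<noteq> {}" "prob_space N" "sets N = sets borel"
  shows "prob_space.indep_vars (PiM I (\<lambda>_. N)) (\<lambda>_. borel) (\<lambda>j \<omega>. \<omega> (f j)) J"
proof -
  interpret P: prob_space "PiM I (\<lambda>_. N)"
    using assms by (intro prob_space_PiM) auto
  have sets_eq: "sets (PiM J (\<lambda>_. N)) = sets (PiM J (\<lambda>_. borel))"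
    using assms(5) by (intro sets_PiM_cong) auto
  have "distr (PiM I (\<lambda>_. N)) (PiM J (\<lambda>_. borel)) (\<lambda>\<omega>. \<lambda>j\<in>J. \<omega> (f j))
      = distr (PiM I (\<lambda>_. N)) (PiM J (\<lambda>_. N)) (\<lambda>\<omega>. \<lambda>j\<in>J. \<omega> (f j))"
    using sets_eq by (rule distr_cong[OF refl, symmetric]) simp
  also have "\<dots> = PiM J (\<lambda>_. N)"
    by (rule distr_PiM_reindex[of I "\<lambda>_. N" f J, simplified]) (use assms(1,2,4) in auto)
  also have "\<dots> = PiM J (\<lambda>j. distr (PiM I (\<lambda>_. N)) borel (\<lambda>\<omega>. \<omega> (f j)))"
    using assms(2) by (intro PiM_cong refl distr_PiM_component_borel[OF assms(4,5), symmetric]) auto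
  finally show ?thesis
    using P.indep_vars_iff_distr_eq_PiM[OF assms(3) borel_measurable_PiM_component[OF assms(5)]] by simp
qed

lemma distributed_PiM_component_gaussian:
  assumes "\<sigma> > 0" "x \<in> I"
  shows "distributed (PiM I (\<lambda>_. gaussian \<sigma>)) lborel (\<lambda>\<omega>. \<omega> x) (normal_density 0 \<sigma>)"
  unfolding distributed_def
proof (intro conjI)
  have "distr (PiM I (\<lambda>_. gaussian \<sigma>)) lborel (\<lambda>\<omega>. \<omega> x) = distr (PiM I (\<lambda>_. gaussian \<sigma>)) borel (\<lambda>\<omega>. \<omega> x)"
    by (rule distr_cong) auto
  also have "\<dots> = gaussian \<sigma>"
    by (rule distr_PiM_component_borel[OF prob_space_normal_density[OF assms(1)] sets_gaussian assms(2)])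
  finally show "distr (PiM I (\<lambda>_. gaussian \<sigma>)) lborel (\<lambda>\<omega>. \<omega> x) = density lborel (\<lambda>x. ennreal (normal_density 0 \<sigma> x))" .
  show "(\<lambda>\<omega>. \<omega> x) \<in> measurable (PiM I (\<lambda>_. gaussian \<sigma>)) lborel"
    by (simp add: measurable_lborel1)
qed simp

lemma distributed_column_lincomb:
  fixes x :: "nat \<Rightarrow> real"
  assumes "\<sigma> > 0" "k < q" "(\<Sum>i<n. (x i)\<^sup>2) = c" "c > 0"
  shows "distributed (PiM ({..<n} \<times> {..<q}) (\<lambda>_. gaussian \<sigma>)) lborel
           (\<lambda>\<omega>. \<Sum>i<n. x i * \<omega> (i, k)) (normal_density 0 (\<sigma> * sqrt c))"
proof -
  let ?M = "PiM ({..<n} \<times> {..<q}) (\<lambda>_. gaussian \<sigma>)"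
  interpret P: prob_space ?M
    using prob_space_normal_density[OF assms(1)] by (intro prob_space_PiM) auto
  define S where "S = {i. i < n \<and> x i \<noteq> 0}"
  have "S \<noteq> {}"
  proof
    assume "S = {}"
    then have "(\<Sum>i<n. (x i)\<^sup>2) = 0" by (simp add: S_def)
    then show False using assms(3,4) by simp
  qed
  then have S: "finite S" "S \<noteq> {}" by (auto simp: S_def)
  have "P.indep_vars (\<lambda>_. borel) (\<lambda>i \<omega>. \<omega> (i, k)) S"
    by (rule indep_vars_PiM_components[OF _ _ S(2) prob_space_normal_density[OF assms(1)] sets_gaussian])
       (auto simp: inj_on_def S_def assms(2))
  then have indep: "P.indep_vars (\<lambda>_. borel) (\<lambda>i \<omega>. x i * \<omega> (i, k)) S"
    using P.indep_vars_compose2[of _ _ S "\<lambda>i z. x i * z" "\<lambda>_. borel"] by simp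
  have summand: "distributed ?M lborel (\<lambda>\<omega>. x i * \<omega> (i, k)) (normal_density 0 (\<bar>x i\<bar> * \<sigma>))"
    if "i \<in> S" for i
  proof -
    have "(i, k) \<in> {..<n} \<times> {..<q}" using that assms(2) by (auto simp: S_def)
    from P.normal_density_affine[OF distributed_PiM_component_gaussian[OF assms(1) this] assms(1), of "x i" 0]
    show ?thesis using that by (simp add: S_def)
  qed
  have "distributed ?M lborel (\<lambda>\<omega>. \<Sum>i\<in>S. x i * \<omega> (i, k))
          (normal_density (\<Sum>i\<in>S. 0) (sqrt (\<Sum>i\<in>S. (\<bar>x i\<bar> * \<sigma>)\<^sup>2)))"
    by (rule P.sum_indep_normal[OF S indep]) (use assms(1) summand in \<open>auto simp: S_def\<close>)
  moreover have "(\<lambda>\<omega>. \<Sum>i\<in>S. x i * \<omega> (i, k)) = (\<lambda>\<omega>. \<Sum>i<n. x i * \<omega> (i, k))"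
    by (intro ext sum.mono_neutral_left) (auto simp: S_def)
  moreover have "(\<Sum>i\<in>S. (\<bar>x i\<bar> * \<sigma>)\<^sup>2) = \<sigma>\<^sup>2 * c"
  proof -
    have "(\<Sum>i\<in>S. (\<bar>x i\<bar> * \<sigma>)\<^sup>2) = (\<Sum>i<n. (\<bar>x i\<bar> * \<sigma>)\<^sup>2)"
      by (intro sum.mono_neutral_left) (auto simp: S_def)
    also have "\<dots> = \<sigma>\<^sup>2 * (\<Sum>i<n. (x i)\<^sup>2)"
      by (simp add: sum_distrib_left power_mult_distrib mult.commute)
    finally show ?thesis using assms(3) by simp
  qed
  ultimately show ?thesis
    using assms(1) by (simp add: real_sqrt_mult)
qed

lemma nn_integral_exp_column_energy:
  fixes x :: "nat \<Rightarrow> real"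
  assumes "\<sigma> > 0" "n \<ge> 1" "q \<ge> 1" "(\<Sum>i<n. (x i)\<^sup>2) = c" "c > 0" "2 * s * (\<sigma>\<^sup>2 * c) < 1"
  shows "(\<integral>\<^sup>+\<omega>. ennreal (exp (s * (\<Sum>k<q. (\<Sum>i<n. x i * \<omega> (i, k))\<^sup>2))) \<partial>PiM ({..<n} \<times> {..<q}) (\<lambda>_. gaussian \<sigma>))
         = ennreal (((1 - 2 * s * (\<sigma>\<^sup>2 * c)) powr (-1/2)) ^ q)"
proof -
  let ?I = "{..<n} \<times> {..<q}"
  let ?M = "PiM ?I (\<lambda>_. gaussian \<sigma>)"
  let ?Z = "\<lambda>k \<omega>. ennreal (exp (s * (\<Sum>i<n. x i * \<omega> (i, k))\<^sup>2))"
  interpret P: prob_space ?M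
    using prob_space_normal_density[OF assms(1)] by (intro prob_space_PiM) auto
  have "(0, 0) \<in> ?I" using assms by auto
  then have "P.indep_vars (\<lambda>_. borel) (\<lambda>ik \<omega>. \<omega> (id ik)) ?I"
    by (intro indep_vars_PiM_components[OF _ _ _ prob_space_normal_density[OF assms(1)] sets_gaussian]) auto
  then have "P.indep_vars (\<lambda>k. PiM ({..<n} \<times> {k}) (\<lambda>_. borel))
      (\<lambda>k \<omega>. restrict (\<lambda>ik. \<omega> (id ik)) ({..<n} \<times> {k})) {..<q}"
    by (rule P.indep_vars_restrict) (auto simp: disjoint_family_on_def)
  then have "P.indep_vars (\<lambda>_. borel)
      (\<lambda>k \<omega>. (\<lambda>g. ennreal (exp (s * (\<Sum>i<n. x i * g (i, k))\<^sup>2))) (restrict (\<lambda>ik. \<omega> (id ik)) ({..<n} \<times> {k}))) {..<q}"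
  proof (rule P.indep_vars_compose2)
    fix k
    have "(\<lambda>g. g (i, k)) \<in> borel_measurable (PiM ({..<n} \<times> {k}) (\<lambda>_. (borel::real measure)))" for i
      using borel_measurable_PiM_component[of "borel::real measure"] by simp
    then show "(\<lambda>g. ennreal (exp (s * (\<Sum>i<n. x i * g (i, k))\<^sup>2))) \<in> borel_measurable (PiM ({..<n} \<times> {k}) (\<lambda>_. borel))"
      by measurable
  qed
  then have indep: "P.indep_vars (\<lambda>_. borel) ?Z {..<q}"
    by simp
  have "(\<integral>\<^sup>+\<omega>. ennreal (exp (s * (\<Sum>k<q. (\<Sum>i<n. x i * \<omega> (i, k))\<^sup>2))) \<partial>?M) = (\<integral>\<^sup>+\<omega>. (\<Prod>k<q. ?Z k \<omega>) \<partial>?M)"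
    by (intro nn_integral_cong) (simp add: prod_ennreal exp_sum sum_distrib_left)
  also have "\<dots> = (\<Prod>k<q. \<integral>\<^sup>+\<omega>. ?Z k \<omega> \<partial>?M)"
    by (rule P.indep_vars_nn_integral[OF _ indep]) auto
  also have "\<dots> = (\<Prod>k<q. \<integral>\<^sup>+y. ennreal (exp (s * y\<^sup>2)) \<partial>gaussian (\<sigma> * sqrt c))"
  proof (intro prod.cong refl)
    fix k assume "k \<in> {..<q}"
    then have "(\<integral>\<^sup>+\<omega>. ?Z k \<omega> \<partial>?M) = (\<integral>\<^sup>+y. ennreal (normal_density 0 (\<sigma> * sqrt c) y) * ennreal (exp (s * y\<^sup>2)) \<partial>lborel)"
      by (intro distributed_nn_integral[OF distributed_column_lincomb[OF assms(1) _ assms(4,5)], symmetric]) auto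
    then show "(\<integral>\<^sup>+\<omega>. ?Z k \<omega> \<partial>?M) = (\<integral>\<^sup>+y. ennreal (exp (s * y\<^sup>2)) \<partial>gaussian (\<sigma> * sqrt c))"
      by (simp add: nn_integral_density)
  qed
  also have "\<dots> = (\<Prod>k<q. ennreal ((1 - 2 * s * (\<sigma>\<^sup>2 * c)) powr (-1/2)))"
    using nn_integral_exp_square_gaussian[of "\<sigma> * sqrt c" s] assms by (simp add: power_mult_distrib)
  also have "\<dots> = ennreal (((1 - 2 * s * (\<sigma>\<^sup>2 * c)) powr (-1/2)) ^ q)"
    by (simp add: prod_ennreal ennreal_power)
  finally show ?thesis .
qed

lemma nn_integral_exp_total_energy:
  assumes "finite I" "\<sigma> > 0" "2 * s * \<sigma>\<^sup>2 < 1"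
  shows "(\<integral>\<^sup>+\<omega>. ennreal (exp (s * (\<Sum>ik\<in>I. (\<omega> ik)\<^sup>2))) \<partial>PiM I (\<lambda>_. gaussian \<sigma>))
         = ennreal (((1 - 2 * s * \<sigma>\<^sup>2) powr (-1/2)) ^ card I)"
proof -
  interpret product_sigma_finite "\<lambda>_. gaussian \<sigma>"
    unfolding product_sigma_finite_def
    using prob_space_normal_density[OF assms(2)] by (simp add: prob_space_imp_sigma_finite)
  have "(\<integral>\<^sup>+\<omega>. ennreal (exp (s * (\<Sum>ik\<in>I. (\<omega> ik)\<^sup>2))) \<partial>PiM I (\<lambda>_. gaussian \<sigma>))
      = (\<integral>\<^sup>+\<omega>. (\<Prod>ik\<in>I. (\<lambda>z. ennreal (exp (s * z\<^sup>2))) (\<omega> ik)) \<partial>PiM I (\<lambda>_. gaussian \<sigma>))"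
    using assms(1) by (intro nn_integral_cong) (simp add: prod_ennreal exp_sum sum_distrib_left)
  also have "\<dots> = (\<Prod>ik\<in>I. \<integral>\<^sup>+z. ennreal (exp (s * z\<^sup>2)) \<partial>gaussian \<sigma>)"
    using assms(1) by (intro product_nn_integral_prod) auto
  also have "\<dots> = ennreal (((1 - 2 * s * \<sigma>\<^sup>2) powr (-1/2)) ^ card I)"
    by (simp add: nn_integral_exp_square_gaussian[OF assms(2,3)] prod_ennreal ennreal_power)
  finally show ?thesis .
qed

lemma Chernoff_upper_tail:
  fixes f :: "'a \<Rightarrow> real"
  assumes "s > 0" "f \<in> borel_measurable M"
  shows "emeasure M {x\<in>space M. a \<le> f x} \<le> ennreal (exp (- s * a)) * (\<integral>\<^sup>+x. ennreal (exp (s * f x)) \<partial>M)"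
proof -
  have "emeasure M {x\<in>space M. a \<le> f x}
      \<le> ennreal (exp (- s * a)) * (\<integral>\<^sup>+x. ennreal (exp (s * f x)) * indicator (space M) x \<partial>M)"
    by (rule Chernoff_ineq_nn_integral_ge[OF assms(1)]) (use assms(2) in auto)
  also have "(\<integral>\<^sup>+x. ennreal (exp (s * f x)) * indicator (space M) x \<partial>M) = (\<integral>\<^sup>+x. ennreal (exp (s * f x)) \<partial>M)"
    by (intro nn_integral_cong) auto
  finally show ?thesis .
qed

lemma Chernoff_lower_tail:
  fixes f :: "'a \<Rightarrow> real"
  assumes "s > 0" "f \<in> borel_measurable M"
  shows "emeasure M {x\<in>space M. f x \<le> a} \<le> ennreal (exp (s * a)) * (\<integral>\<^sup>+x. ennreal (exp (- s * f x)) \<partial>M)"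
proof -
  have "emeasure M {x\<in>space M. f x \<le> a}
      \<le> ennreal (exp (s * a)) * (\<integral>\<^sup>+x. ennreal (exp (- s * f x)) * indicator (space M) x \<partial>M)"
    by (rule Chernoff_ineq_nn_integral_le[OF assms(1)]) (use assms(2) in auto)
  also have "(\<integral>\<^sup>+x. ennreal (exp (- s * f x)) * indicator (space M) x \<partial>M) = (\<integral>\<^sup>+x. ennreal (exp (- s * f x)) \<partial>M)"
    by (intro nn_integral_cong) auto
  finally show ?thesis .
qed

lemma column_energy_upper_tail:
  fixes x :: "nat \<Rightarrow> real" and n q :: nat
  assumes "\<sigma> > 0" "n \<ge> 1" "q \<ge> 1" "(\<Sum>i<n. (x i)\<^sup>2) = c" "c > 0" "r > 1"
  shows "emeasure (PiM ({..<n} \<times> {..<q}) (\<lambda>_. gaussian \<sigma>))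
           {\<omega>\<in>space (PiM ({..<n} \<times> {..<q}) (\<lambda>_. gaussian \<sigma>)). \<sigma>\<^sup>2 * c * real q * r\<^sup>2 \<le> (\<Sum>k<q. (\<Sum>i<n. x i * \<omega> (i, k))\<^sup>2)}
         \<le> ennreal (exp (- real q * (r - 1)\<^sup>2 / 2))"
proof -
  let ?M = "PiM ({..<n} \<times> {..<q}) (\<lambda>_. gaussian \<sigma>)"
  define s where "s = (1 - 1 / r\<^sup>2) / (2 * \<sigma>\<^sup>2 * c)"
    \<comment> \<open>makes the moment generating function at s equal to r ^ q\<close>
  have r2: "r\<^sup>2 > 1" using assms(6) by (simp add: one_less_power)
  have s: "s > 0" unfolding s_def using assms r2 by (auto intro!: divide_pos_pos simp: field_simps)
  have s_eq: "1 - 2 * s * (\<sigma>\<^sup>2 * c) = 1 / r\<^sup>2" unfolding s_def using assms by (simp add: field_simps)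
  have "emeasure ?M {\<omega>\<in>space ?M. \<sigma>\<^sup>2 * c * real q * r\<^sup>2 \<le> (\<Sum>k<q. (\<Sum>i<n. x i * \<omega> (i, k))\<^sup>2)}
     \<le> ennreal (exp (- s * (\<sigma>\<^sup>2 * c * real q * r\<^sup>2))) * (\<integral>\<^sup>+\<omega>. ennreal (exp (s * (\<Sum>k<q. (\<Sum>i<n. x i * \<omega> (i, k))\<^sup>2))) \<partial>?M)"
    by (rule Chernoff_upper_tail[OF s]) measurable
  also have "(\<integral>\<^sup>+\<omega>. ennreal (exp (s * (\<Sum>k<q. (\<Sum>i<n. x i * \<omega> (i, k))\<^sup>2))) \<partial>?M)
      = ennreal (((1 - 2 * s * (\<sigma>\<^sup>2 * c)) powr (-1/2)) ^ q)"
  proof (rule nn_integral_exp_column_energy[OF assms(1-5)])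
    have "1 / r\<^sup>2 > 0" using assms(6) by simp
    then show "2 * s * (\<sigma>\<^sup>2 * c) < 1" using s_eq by linarith
  qed
  also have "ennreal (exp (- s * (\<sigma>\<^sup>2 * c * real q * r\<^sup>2))) * ennreal (((1 - 2 * s * (\<sigma>\<^sup>2 * c)) powr (-1/2)) ^ q)
      = ennreal (exp (- (r\<^sup>2 - 1) * real q / 2) * r ^ q)"
  proof -
    have "- s * (\<sigma>\<^sup>2 * c * real q * r\<^sup>2) = - (r\<^sup>2 - 1) * real q / 2"
      unfolding s_def using assms r2 by (simp add: field_simps)
    moreover have "(1 - 2 * s * (\<sigma>\<^sup>2 * c)) powr (-1/2) = r"
      unfolding s_eq using assms(6) r2
      by (simp add: powr_minus_divide powr_half_sqrt real_sqrt_divide)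
    ultimately show ?thesis
      using assms(6) by (simp add: ennreal_mult'[symmetric] ennreal_power)
  qed
  also have "exp (- (r\<^sup>2 - 1) * real q / 2) * r ^ q \<le> exp (- real q * (r - 1)\<^sup>2 / 2)"
  proof -
    have "r ^ q \<le> exp (r - 1) ^ q"
      using exp_ge_add_one_self[of "r - 1"] assms(6) by (intro power_mono) auto
    also have "\<dots> = exp (real q * (r - 1))" by (simp add: exp_of_nat_mult[symmetric])
    finally have "exp (- (r\<^sup>2 - 1) * real q / 2) * r ^ q \<le> exp (- (r\<^sup>2 - 1) * real q / 2 + real q * (r - 1))"
      by (simp add: exp_add)
    also have "- (r\<^sup>2 - 1) * real q / 2 + real q * (r - 1) = - real q * (r - 1)\<^sup>2 / 2"
      by (simp add: power2_eq_square field_simps)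
    finally show ?thesis .
  qed
  finally show ?thesis by (simp add: ennreal_leI)
qed

lemma powr_power_eq_exp: "x > 0 \<Longrightarrow> (x powr a) ^ m = exp (real m * a * ln x)"
  by (simp add: powr_def exp_of_nat_mult[symmetric] mult.assoc)

lemma total_energy_lower_tail:
  assumes "finite I" "\<sigma> > 0"
  shows "emeasure (PiM I (\<lambda>_. gaussian \<sigma>))
           {\<omega>\<in>space (PiM I (\<lambda>_. gaussian \<sigma>)). (\<Sum>i\<in>I. (\<omega> i)\<^sup>2) \<le> real (card I) * \<sigma>\<^sup>2 / 2}
         \<le> ennreal (exp (- real (card I) / 24))"
proof -
  let ?M = "PiM I (\<lambda>_. gaussian \<sigma>)" and ?N = "real (card I)"
  define s where "s = 1 / (2 * \<sigma>\<^sup>2)"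
  have s: "s > 0" and s_\<sigma>: "s * \<sigma>\<^sup>2 = 1 / 2" unfolding s_def using assms by simp_all
  have "emeasure ?M {\<omega>\<in>space ?M. (\<Sum>i\<in>I. (\<omega> i)\<^sup>2) \<le> ?N * \<sigma>\<^sup>2 / 2}
      \<le> ennreal (exp (s * (?N * \<sigma>\<^sup>2 / 2))) * (\<integral>\<^sup>+\<omega>. ennreal (exp (- s * (\<Sum>i\<in>I. (\<omega> i)\<^sup>2))) \<partial>?M)"
    by (rule Chernoff_lower_tail[OF s]) measurable
  also have "(\<integral>\<^sup>+\<omega>. ennreal (exp (- s * (\<Sum>i\<in>I. (\<omega> i)\<^sup>2))) \<partial>?M)
     = ennreal (((1 - 2 * (- s) * \<sigma>\<^sup>2) powr (-1/2)) ^ card I)"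
    by (rule nn_integral_exp_total_energy[OF assms]) (use s_\<sigma> in simp)
  also have "ennreal (exp (s * (?N * \<sigma>\<^sup>2 / 2))) * ennreal (((1 - 2 * (- s) * \<sigma>\<^sup>2) powr (-1/2)) ^ card I)
      = ennreal (exp (?N / 4 - ?N * ln 2 / 2))"
  proof -
    have "s * (?N * \<sigma>\<^sup>2 / 2) = ?N / 4" and two: "1 - 2 * (- s) * \<sigma>\<^sup>2 = 2"
      using s_\<sigma> by (simp_all add: algebra_simps)
    then show ?thesis
      unfolding two by (simp add: powr_power_eq_exp ennreal_mult'[symmetric] mult_exp_exp)
  qed
  also have "\<dots> \<le> ennreal (exp (- ?N / 24))"
  proof (intro ennreal_leI exp_mono)
    have "?N * (7/12) \<le> ?N * ln 2"
      using ln2_ge_two_thirds by (intro mult_left_mono) auto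
    then show "?N / 4 - ?N * ln 2 / 2 \<le> - ?N / 24" by linarith
  qed
  finally show ?thesis .
qed

lemma total_energy_upper_tail:
  assumes "finite I" "\<sigma> > 0"
  shows "emeasure (PiM I (\<lambda>_. gaussian \<sigma>))
           {\<omega>\<in>space (PiM I (\<lambda>_. gaussian \<sigma>)). 4 * real (card I) * \<sigma>\<^sup>2 \<le> (\<Sum>i\<in>I. (\<omega> i)\<^sup>2)}
         \<le> ennreal (exp (- real (card I) / 24))"
proof -
  let ?M = "PiM I (\<lambda>_. gaussian \<sigma>)" and ?N = "real (card I)"
  define s where "s = 1 / (4 * \<sigma>\<^sup>2)"
  have s: "s > 0" and s_\<sigma>: "s * \<sigma>\<^sup>2 = 1 / 4" unfolding s_def using assms by simp_all
  have "emeasure ?M {\<omega>\<in>space ?M. 4 * ?N * \<sigma>\<^sup>2 \<le> (\<Sum>i\<in>I. (\<omega> i)\<^sup>2)}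
      \<le> ennreal (exp (- s * (4 * ?N * \<sigma>\<^sup>2))) * (\<integral>\<^sup>+\<omega>. ennreal (exp (s * (\<Sum>i\<in>I. (\<omega> i)\<^sup>2))) \<partial>?M)"
    by (rule Chernoff_upper_tail[OF s]) measurable
  also have "(\<integral>\<^sup>+\<omega>. ennreal (exp (s * (\<Sum>i\<in>I. (\<omega> i)\<^sup>2))) \<partial>?M)
     = ennreal (((1 - 2 * s * \<sigma>\<^sup>2) powr (-1/2)) ^ card I)"
    by (rule nn_integral_exp_total_energy[OF assms]) (use s_\<sigma> in simp)
  also have "ennreal (exp (- s * (4 * ?N * \<sigma>\<^sup>2))) * ennreal (((1 - 2 * s * \<sigma>\<^sup>2) powr (-1/2)) ^ card I)
      = ennreal (exp (- ?N + ?N * ln 2 / 2))"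
  proof -
    have "- s * (4 * ?N * \<sigma>\<^sup>2) = - ?N" and half: "1 - 2 * s * \<sigma>\<^sup>2 = 1 / 2"
      using s_\<sigma> by (simp_all add: algebra_simps)
    then show ?thesis
      unfolding half by (simp add: powr_power_eq_exp ln_div ennreal_mult'[symmetric] mult_exp_exp)
  qed
  also have "\<dots> \<le> ennreal (exp (- ?N / 24))"
  proof (intro ennreal_leI exp_mono)
    have "?N * ln 2 \<le> ?N * 1"
      using ln_2_less_1 by (intro mult_left_mono) auto
    then show "- ?N + ?N * ln 2 / 2 \<le> - ?N / 24" by linarith
  qed
  finally show ?thesis .
qed

lemma measure_total_energy_tails_le:
  assumes "finite I" "\<sigma> > 0"
  shows "measure (PiM I (\<lambda>_. gaussian \<sigma>))
           {\<omega>\<in>space (PiM I (\<lambda>_. gaussian \<sigma>)). (\<Sum>i\<in>I. (\<omega> i)\<^sup>2) \<le> real (card I) * \<sigma>\<^sup>2 / 2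
                                         \<or> 4 * real (card I) * \<sigma>\<^sup>2 \<le> (\<Sum>i\<in>I. (\<omega> i)\<^sup>2)}
         \<le> 2 * exp (- real (card I) / 24)" (is "measure ?M ?tails \<le> _")
proof -
  let ?low = "{\<omega>\<in>space ?M. (\<Sum>i\<in>I. (\<omega> i)\<^sup>2) \<le> real (card I) * \<sigma>\<^sup>2 / 2}"
  let ?high = "{\<omega>\<in>space ?M. 4 * real (card I) * \<sigma>\<^sup>2 \<le> (\<Sum>i\<in>I. (\<omega> i)\<^sup>2)}"
  interpret prob_space ?M
    using prob_space_normal_density[OF assms(2)] by (intro prob_space_PiM) auto
  have "?tails = ?low \<union> ?high" by auto
  then have "measure ?M ?tails \<le> measure ?M ?low + measure ?M ?high"
    by (simp add: measure_Un_le)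
  also have "\<dots> \<le> exp (- real (card I) / 24) + exp (- real (card I) / 24)"
    using total_energy_lower_tail[OF assms] total_energy_upper_tail[OF assms]
    by (intro add_mono) (simp_all add: emeasure_eq_measure)
  finally show ?thesis by simp
qed

section \<open>Row norms, the Gram matrix and residuals\<close>

lemma row_norm_eq_L2_set: "row_norm q M j = L2_set (M j) {..<q}"
  unfolding row_norm_def L2_set_def by simp

lemma fro_eq_L2_set: "fro n q M = L2_set (\<lambda>(i, k). M i k) ({..<n} \<times> {..<q})"
  unfolding fro_def L2_set_def by (simp add: sum.cartesian_product case_prod_beta)

lemma row_norm_nonneg: "row_norm q M j \<ge> 0"
  by (simp add: row_norm_eq_L2_set)

lemma norm21_nonneg: "norm21 p q M \<ge> 0"
  unfolding norm21_def by (simp add: sum_nonneg row_norm_nonneg)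

lemma fro_nonneg: "fro n q M \<ge> 0"
  by (simp add: fro_eq_L2_set)

lemma fro_power2: "(fro n q M)\<^sup>2 = (\<Sum>i<n. \<Sum>k<q. (M i k)\<^sup>2)"
  unfolding fro_def by (simp add: sum_nonneg)

lemma L2_set_power2: "finite K \<Longrightarrow> (L2_set f K)\<^sup>2 = (\<Sum>k\<in>K. (f k)\<^sup>2)"
  unfolding L2_set_def by (simp add: sum_nonneg)

lemma L2_set_cmult: "L2_set (\<lambda>k. c * f k) K = \<bar>c\<bar> * L2_set f K"
proof -
  have "L2_set (\<lambda>k. c * f k) K = L2_set (\<lambda>k. \<bar>c\<bar> * f k) K"
    unfolding L2_set_def by (simp add: power_mult_distrib)
  also have "\<dots> = \<bar>c\<bar> * L2_set f K" by (simp add: L2_set_right_distrib)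
  finally show ?thesis .
qed

lemma L2_set_diff_triangle_ineq: "L2_set (\<lambda>k. f k - g k) K \<le> L2_set f K + L2_set g K"
  using L2_set_triangle_ineq[of f "\<lambda>k. - g k" K] by (simp add: L2_set_def)

lemma L2_set_sum_le: "finite J \<Longrightarrow> L2_set (\<lambda>k. \<Sum>j\<in>J. f j k) K \<le> (\<Sum>j\<in>J. L2_set (f j) K)"
proof (induction J rule: finite_induct)
  case (insert x F)
  have "L2_set (\<lambda>k. f x k + (\<Sum>j\<in>F. f j k)) K \<le> L2_set (f x) K + L2_set (\<lambda>k. \<Sum>j\<in>F. f j k) K"
    by (rule L2_set_triangle_ineq)
  with insert show ?case by simp
qed (simp add: L2_set_0')

lemma sum_mult_le_L2_set: "(\<Sum>k\<in>K. f k * g k) \<le> L2_set f K * L2_set g K"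
proof -
  have "(\<Sum>k\<in>K. f k * g k) \<le> (\<Sum>k\<in>K. \<bar>f k\<bar> * \<bar>g k\<bar>)"
    by (intro sum_mono) (simp add: abs_mult[symmetric])
  also have "\<dots> \<le> L2_set f K * L2_set g K" by (rule L2_set_mult_ineq)
  finally show ?thesis .
qed

lemma sum_inner_le_fro: "(\<Sum>i<n. \<Sum>k<q. A i k * B i k) \<le> fro n q A * fro n q B"
  using sum_mult_le_L2_set[of "\<lambda>(i, k). A i k" "\<lambda>(i, k). B i k" "{..<n} \<times> {..<q}"]
  by (simp add: fro_eq_L2_set sum.cartesian_product case_prod_beta)

definition tmatmul :: "nat \<Rightarrow> (nat \<Rightarrow> nat \<Rightarrow> real) \<Rightarrow> (nat \<Rightarrow> nat \<Rightarrow> real) \<Rightarrow> nat \<Rightarrow> nat \<Rightarrow> real" where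
  "tmatmul n X R j k = (\<Sum>i<n. X i j * R i k)"

lemma gram_matmul:
  assumes "n \<ge> 1"
  shows "real n * (\<Sum>j'<p. gram n X j j' * D j' k) = tmatmul n X (matmul p X D) j k"
proof -
  have "real n * (\<Sum>j'<p. gram n X j j' * D j' k) = (\<Sum>j'<p. \<Sum>i<n. X i j * X i j' * D j' k)"
    using assms unfolding gram_def by (simp add: sum_distrib_left sum_distrib_right)
  also have "\<dots> = (\<Sum>i<n. \<Sum>j'<p. X i j * X i j' * D j' k)" by (rule sum.swap)
  also have "\<dots> = tmatmul n X (matmul p X D) j k"
    unfolding tmatmul_def matmul_def by (simp add: sum_distrib_left mult.assoc)
  finally show ?thesis .
qed

lemma sum_power2_column_eq: "n \<ge> 1 \<Longrightarrow> gram n X j j = 1 \<Longrightarrow> (\<Sum>i<n. (X i j)\<^sup>2) = real n"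
  unfolding gram_def by (simp add: power2_eq_square field_simps)

lemma residual_obs: "msub (obs p X Bs E) (matmul p X B) i k = E (i, k) - matmul p X (msub B Bs) i k"
  unfolding msub_def obs_def matmul_def by (simp add: sum_subtractf algebra_simps)

lemma residual_obs_at_truth: "msub (obs p X Bs E) (matmul p X Bs) = (\<lambda>i k. E (i, k))"
  unfolding msub_def obs_def matmul_def by simp

lemma tmatmul_matmul_diff:
  "tmatmul n X (matmul p X (msub B Bs)) j k
     = tmatmul n X (\<lambda>i k. E (i, k)) j k - tmatmul n X (msub (obs p X Bs E) (matmul p X B)) j k"
  unfolding tmatmul_def residual_obs by (simp add: sum_subtractf algebra_simps)

lemma row_norm_le_gram_row:
  assumes "j < p" "gram n X j j = 1" "\<forall>j'<p. j' \<noteq> j \<longrightarrow> \<bar>gram n X j j'\<bar> \<le> \<mu>" "\<mu> \<ge> 0"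
  shows "row_norm q D j \<le> L2_set (\<lambda>k. \<Sum>j'<p. gram n X j j' * D j' k) {..<q} + \<mu> * norm21 p q D"
proof -
  let ?J = "{..<p} - {j}"
  have split: "(\<Sum>j'<p. gram n X j j' * D j' k) = D j k + (\<Sum>j'\<in>?J. gram n X j j' * D j' k)" for k
    using assms(1,2) by (simp add: sum.remove[of "{..<p}" j])
  have "row_norm q D j
      = L2_set (\<lambda>k. (\<Sum>j'<p. gram n X j j' * D j' k) - (\<Sum>j'\<in>?J. gram n X j j' * D j' k)) {..<q}"
    unfolding row_norm_eq_L2_set split by simp
  also have "\<dots> \<le> L2_set (\<lambda>k. \<Sum>j'<p. gram n X j j' * D j' k) {..<q}
                 + L2_set (\<lambda>k. \<Sum>j'\<in>?J. gram n X j j' * D j' k) {..<q}"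
    by (rule L2_set_diff_triangle_ineq)
  also have "L2_set (\<lambda>k. \<Sum>j'\<in>?J. gram n X j j' * D j' k) {..<q} \<le> (\<Sum>j'\<in>?J. \<bar>gram n X j j'\<bar> * row_norm q D j')"
    using L2_set_sum_le[of ?J "\<lambda>j' k. gram n X j j' * D j' k" "{..<q}"]
    by (simp add: L2_set_cmult row_norm_eq_L2_set)
  also have "\<dots> \<le> (\<Sum>j'<p. \<mu> * row_norm q D j')"
    using assms(3,4)
    by (intro order.trans[OF sum_mono sum_mono2]) (auto intro: mult_right_mono simp: row_norm_nonneg)
  also have "\<dots> = \<mu> * norm21 p q D" unfolding norm21_def by (simp add: sum_distrib_left)
  finally show ?thesis by simp
qed

lemma row_norm_error_le:
  assumes "n \<ge> 1" "j < p" "gram n X j j = 1" "\<forall>j'<p. j' \<noteq> j \<longrightarrow> \<bar>gram n X j j'\<bar> \<le> \<mu>" "\<mu> \<ge> 0"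
  shows "row_norm q (msub B Bs) j
    \<le> (L2_set (tmatmul n X (\<lambda>i k. E (i, k)) j) {..<q}
       + L2_set (tmatmul n X (msub (obs p X Bs E) (matmul p X B)) j) {..<q}) / real n
      + \<mu> * norm21 p q (msub B Bs)"
proof -
  let ?D = "msub B Bs"
  have "real n * L2_set (\<lambda>k. \<Sum>j'<p. gram n X j j' * ?D j' k) {..<q}
      = L2_set (tmatmul n X (matmul p X ?D) j) {..<q}"
    by (simp add: L2_set_right_distrib gram_matmul[OF assms(1)])
  also have "\<dots> = L2_set (\<lambda>k. tmatmul n X (\<lambda>i k. E (i, k)) j k
                              - tmatmul n X (msub (obs p X Bs E) (matmul p X B)) j k) {..<q}"
    by (rule L2_set_cong) (simp_all add: tmatmul_matmul_diff)
  also have "\<dots> \<le> L2_set (tmatmul n X (\<lambda>i k. E (i, k)) j) {..<q}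
                 + L2_set (tmatmul n X (msub (obs p X Bs E) (matmul p X B)) j) {..<q}"
    by (rule L2_set_diff_triangle_ineq)
  finally have "L2_set (\<lambda>k. \<Sum>j'<p. gram n X j j' * ?D j' k) {..<q}
      \<le> (L2_set (tmatmul n X (\<lambda>i k. E (i, k)) j) {..<q}
         + L2_set (tmatmul n X (msub (obs p X Bs E) (matmul p X B)) j) {..<q}) / real n"
    using assms(1) by (simp add: field_simps)
  then show ?thesis
    using row_norm_le_gram_row[OF assms(2-5), of q ?D] by linarith
qed

section \<open>Optimality along a single row\<close>

definition shift_row :: "(nat \<Rightarrow> nat \<Rightarrow> real) \<Rightarrow> nat \<Rightarrow> real \<Rightarrow> (nat \<Rightarrow> real) \<Rightarrow> nat \<Rightarrow> nat \<Rightarrow> real" where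
  "shift_row B j t w = (\<lambda>j' k. B j' k + (if j' = j then t * w k else 0))"

lemma residual_shift_row:
  assumes "j < p"
  shows "msub Y (matmul p X (shift_row B j t w)) i k = msub Y (matmul p X B) i k - t * X i j * w k"
proof -
  have "(\<Sum>j'<p. X i j' * (if j' = j then t * w k else 0)) = (\<Sum>j'<p. if j' = j then X i j * (t * w k) else 0)"
    by (intro sum.cong) auto
  also have "\<dots> = X i j * (t * w k)"
    using assms by simp
  finally show ?thesis
    unfolding msub_def matmul_def shift_row_def by (simp add: distrib_left sum.distrib)
qed

lemma fro_residual_shift_row:
  fixes Y B X :: "nat \<Rightarrow> nat \<Rightarrow> real"
  assumes "j < p" "(\<Sum>i<n. (X i j)\<^sup>2) = real n"
  defines "R \<equiv> msub Y (matmul p X B)"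
  defines "w \<equiv> tmatmul n X R j"
  shows "(fro n q (msub Y (matmul p X (shift_row B j t w))))\<^sup>2
         = (fro n q R)\<^sup>2 - 2 * t * (L2_set w {..<q})\<^sup>2 + t\<^sup>2 * real n * (L2_set w {..<q})\<^sup>2"
proof -
  have expand: "(R i k - t * X i j * w k)\<^sup>2 = (R i k)\<^sup>2 - 2 * t * (X i j * R i k * w k) + t\<^sup>2 * ((X i j)\<^sup>2 * (w k)\<^sup>2)" for i k
    by (simp add: power2_eq_square algebra_simps)
  have cross: "(\<Sum>i<n. \<Sum>k<q. X i j * R i k * w k) = (\<Sum>k<q. (w k)\<^sup>2)"
  proof -
    have "(\<Sum>i<n. \<Sum>k<q. X i j * R i k * w k) = (\<Sum>k<q. \<Sum>i<n. X i j * R i k * w k)" by (rule sum.swap)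
    also have "\<dots> = (\<Sum>k<q. w k * w k)"
      unfolding w_def tmatmul_def by (simp add: sum_distrib_right mult.commute)
    finally show ?thesis by (simp add: power2_eq_square)
  qed
  have "(fro n q (msub Y (matmul p X (shift_row B j t w))))\<^sup>2 = (\<Sum>i<n. \<Sum>k<q. (R i k - t * X i j * w k)\<^sup>2)"
    unfolding fro_power2 residual_shift_row[OF assms(1)] R_def by simp
  also have "\<dots> = (\<Sum>i<n. \<Sum>k<q. (R i k)\<^sup>2) - 2 * t * (\<Sum>i<n. \<Sum>k<q. X i j * R i k * w k)
                  + t\<^sup>2 * (\<Sum>i<n. \<Sum>k<q. (X i j)\<^sup>2 * (w k)\<^sup>2)"
    unfolding expand by (simp add: sum.distrib sum_subtractf sum_distrib_left)
  also have "(\<Sum>i<n. \<Sum>k<q. (X i j)\<^sup>2 * (w k)\<^sup>2) = real n * (\<Sum>k<q. (w k)\<^sup>2)"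
    using assms(2) by (simp add: sum_distrib_left[symmetric] sum_distrib_right[symmetric])
  finally show ?thesis
    unfolding cross fro_power2 by (simp add: L2_set_power2 mult.assoc)
qed

lemma norm21_shift_row_le:
  assumes "j < p" "t \<ge> 0"
  shows "norm21 p q (shift_row B j t w) \<le> norm21 p q B + t * L2_set w {..<q}"
proof -
  have "row_norm q (shift_row B j t w) j' \<le> row_norm q B j' + (if j' = j then t * L2_set w {..<q} else 0)" for j'
  proof (cases "j' = j")
    case True
    have "L2_set (\<lambda>k. B j k + t * w k) {..<q} \<le> L2_set (B j) {..<q} + L2_set (\<lambda>k. t * w k) {..<q}"
      by (rule L2_set_triangle_ineq)
    then show ?thesis
      using True assms(2) by (simp add: row_norm_eq_L2_set shift_row_def L2_set_cmult)
  qed (simp add: row_norm_eq_L2_set shift_row_def)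
  then have "norm21 p q (shift_row B j t w) \<le> (\<Sum>j'<p. row_norm q B j' + (if j' = j then t * L2_set w {..<q} else 0))"
    unfolding norm21_def by (intro sum_mono) auto
  also have "\<dots> = norm21 p q B + t * L2_set w {..<q}"
    using assms(1) unfolding norm21_def by (simp add: sum.distrib)
  finally show ?thesis .
qed

lemma nonneg_of_nonneg_near_0:
  fixes x y \<delta> :: real
  assumes "\<delta> > 0" and "\<And>t. 0 < t \<Longrightarrow> t < \<delta> \<Longrightarrow> 0 \<le> x + t * y"
  shows "0 \<le> x"
proof (rule tendsto_lowerbound)
  show "((\<lambda>t. x + t * y) \<longlongrightarrow> x) (at_right 0)"
    by (auto intro!: tendsto_eq_intros)
  show "\<forall>\<^sub>F t in at_right 0. 0 \<le> x + t * y"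
    using assms by (auto simp: eventually_at_right_field)
qed simp

text \<open>Minimality of the square-root Lasso objective along t \<mapsto> B + t e_j w^T yields these
  hypotheses, with a the residual norm and W = |w|; the conclusion is the first-order
  condition at t = 0.\<close>

lemma le_of_sqrt_perturbation:
  fixes a W c m :: real
  assumes a: "a \<ge> 0" and W: "W \<ge> 0" and c: "c > 0"
    and nonneg: "\<And>t. t > 0 \<Longrightarrow> 0 \<le> a\<^sup>2 - 2 * t * W\<^sup>2 + t\<^sup>2 * m * W\<^sup>2"
    and perturb: "\<And>t. t > 0 \<Longrightarrow> a - t * c * W \<le> sqrt (a\<^sup>2 - 2 * t * W\<^sup>2 + t\<^sup>2 * m * W\<^sup>2)"
  shows "W \<le> c * a"
proof (cases "a = 0")
  case True
  have near_0: "0 \<le> - 2 * W\<^sup>2 + t * (m * W\<^sup>2)" if t: "t > 0" for t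
  proof -
    have "a\<^sup>2 - 2 * t * W\<^sup>2 + t\<^sup>2 * m * W\<^sup>2 = t * (- 2 * W\<^sup>2 + t * (m * W\<^sup>2))"
      using True by (simp add: power2_eq_square algebra_simps)
    then show ?thesis using nonneg[OF t] t by (simp add: zero_le_mult_iff)
  qed
  have "0 \<le> - 2 * W\<^sup>2"
    by (rule nonneg_of_nonneg_near_0[where \<delta> = 1 and y = "m * W\<^sup>2"]) (use near_0 in auto)
  then show ?thesis using True by simp
next
  case False
  with a have a: "a > 0" by simp
  have near_0: "0 \<le> 2 * W * (c * a - W) + t * ((m - c\<^sup>2) * W\<^sup>2)" if t: "0 < t" "t < a / (c * W + 1)" for t
  proof -
    have "t * (c * W) \<le> t * (c * W + 1)" using t(1) by simp
    also have "\<dots> < a" using t(2) c W by (simp add: pos_less_divide_eq add_nonneg_pos)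
    finally have "0 \<le> a - t * c * W" by simp
    then have "(a - t * c * W)\<^sup>2 \<le> a\<^sup>2 - 2 * t * W\<^sup>2 + t\<^sup>2 * m * W\<^sup>2"
      using power_mono[OF perturb[OF t(1)], of 2] nonneg[OF t(1)] by simp
    moreover have "a\<^sup>2 - 2 * t * W\<^sup>2 + t\<^sup>2 * m * W\<^sup>2 - (a - t * c * W)\<^sup>2
        = t * (2 * W * (c * a - W) + t * ((m - c\<^sup>2) * W\<^sup>2))"
      by (simp add: power2_eq_square algebra_simps)
    ultimately have "0 \<le> t * (2 * W * (c * a - W) + t * ((m - c\<^sup>2) * W\<^sup>2))" by linarith
    then show ?thesis using t(1) by (simp add: zero_le_mult_iff)
  qed
  have "0 \<le> 2 * W * (c * a - W)"
    by (rule nonneg_of_nonneg_near_0[where \<delta> = "a / (c * W + 1)" and y = "(m - c\<^sup>2) * W\<^sup>2"])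
       (use a c W near_0 in \<open>auto simp: add_nonneg_pos\<close>)
  then show ?thesis
    using W a c by (cases "W = 0") (auto simp: zero_le_mult_iff)
qed

lemma le_of_quadratic_perturbation:
  fixes W m d lam :: real
  assumes W: "W \<ge> 0" and d: "d > 0" and lam: "lam \<ge> 0"
    and perturb: "\<And>t. t > 0 \<Longrightarrow> 0 \<le> (- 2 * t * W\<^sup>2 + t\<^sup>2 * m * W\<^sup>2) / d + lam * t * W"
  shows "W \<le> lam * d / 2"
proof -
  have near_0: "0 \<le> (lam * W - 2 * W\<^sup>2 / d) + t * (m * W\<^sup>2 / d)" if t: "t > 0" for t
  proof -
    have "(- 2 * t * W\<^sup>2 + t\<^sup>2 * m * W\<^sup>2) / d + lam * t * W = t * ((lam * W - 2 * W\<^sup>2 / d) + t * (m * W\<^sup>2 / d))"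
      by (simp add: power2_eq_square add_divide_distrib diff_divide_distrib algebra_simps)
    then show ?thesis using perturb[OF t] t by (simp add: zero_le_mult_iff)
  qed
  have "0 \<le> lam * W - 2 * W\<^sup>2 / d"
    by (rule nonneg_of_nonneg_near_0[where \<delta> = 1 and y = "m * W\<^sup>2 / d"]) (use near_0 in auto)
  then have "2 * W\<^sup>2 / d \<le> lam * W" by simp
  then have "W * W \<le> W * (lam * d / 2)"
    using d by (simp add: power2_eq_square divide_le_eq algebra_simps)
  then show ?thesis
    using W d lam by (cases "W = 0") auto
qed

lemma sqrt_lasso_min_row_correlation:
  assumes n: "n \<ge> 1" and q: "q \<ge> 1" and lam: "lam > 0" and j: "j < p"
    and col: "(\<Sum>i<n. (X i j)\<^sup>2) = real n"
    and min: "\<forall>B. sqrt_lasso_obj n p q X Y lam Bh \<le> sqrt_lasso_obj n p q X Y lam B"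
  shows "L2_set (tmatmul n X (msub Y (matmul p X Bh)) j) {..<q}
           \<le> lam * sqrt (real n * real q) * fro n q (msub Y (matmul p X Bh))"
proof -
  define R where "R = msub Y (matmul p X Bh)"
  define w where "w = tmatmul n X R j"
  define W where "W = L2_set w {..<q}"
  define N where "N = sqrt (real n * real q)"
  have N: "N > 0" unfolding N_def using n q by simp
  have fro_shift: "(fro n q (msub Y (matmul p X (shift_row Bh j t w))))\<^sup>2
      = (fro n q R)\<^sup>2 - 2 * t * W\<^sup>2 + t\<^sup>2 * real n * W\<^sup>2" for t
    unfolding R_def w_def W_def by (rule fro_residual_shift_row[where Y = Y and B = Bh and X = X and n = n and j = j, OF j col])
  have "W \<le> (lam * N) * fro n q R"
  proof (rule le_of_sqrt_perturbation)
    show "0 \<le> fro n q R" "0 \<le> W" "0 < lam * N"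
      using lam N by (auto simp: W_def fro_nonneg)
    fix t :: real assume t: "t > 0"
    show "0 \<le> (fro n q R)\<^sup>2 - 2 * t * W\<^sup>2 + t\<^sup>2 * real n * W\<^sup>2"
      unfolding fro_shift[symmetric] by simp
    have "fro n q R / N + lam * norm21 p q Bh
        \<le> fro n q (msub Y (matmul p X (shift_row Bh j t w))) / N + lam * norm21 p q (shift_row Bh j t w)"
      using min unfolding sqrt_lasso_obj_def R_def N_def by blast
    also have "\<dots> \<le> fro n q (msub Y (matmul p X (shift_row Bh j t w))) / N + lam * (norm21 p q Bh + t * W)"
      using norm21_shift_row_le[OF j, where t = t and B = Bh and q = q and w = w] t lam unfolding W_def by simp
    finally have "fro n q R / N \<le> fro n q (msub Y (matmul p X (shift_row Bh j t w))) / N + lam * t * W"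
      by (simp add: algebra_simps)
    then have "fro n q R \<le> fro n q (msub Y (matmul p X (shift_row Bh j t w))) + lam * N * t * W"
      using N by (simp add: field_simps)
    moreover have "fro n q (msub Y (matmul p X (shift_row Bh j t w)))
        = sqrt ((fro n q R)\<^sup>2 - 2 * t * W\<^sup>2 + t\<^sup>2 * real n * W\<^sup>2)"
      unfolding fro_shift[symmetric] by (simp add: fro_nonneg)
    ultimately show "fro n q R - t * (lam * N) * W \<le> sqrt ((fro n q R)\<^sup>2 - 2 * t * W\<^sup>2 + t\<^sup>2 * real n * W\<^sup>2)"
      by (simp add: algebra_simps)
  qed
  then show ?thesis unfolding W_def w_def R_def N_def .
qed

lemma smooth_min_row_correlation:
  assumes n: "n \<ge> 1" and q: "q \<ge> 1" and lam: "lam > 0" and j: "j < p"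
    and col: "(\<Sum>i<n. (X i j)\<^sup>2) = real n" and \<sigma>h: "\<sigma>h > 0"
    and min: "\<forall>B. smooth_obj n p q X Y lam Bh \<sigma>h \<le> smooth_obj n p q X Y lam B \<sigma>h"
  shows "L2_set (tmatmul n X (msub Y (matmul p X Bh)) j) {..<q} \<le> lam * (real n * real q * \<sigma>h)"
proof -
  define R where "R = msub Y (matmul p X Bh)"
  define w where "w = tmatmul n X R j"
  define W where "W = L2_set w {..<q}"
  define d where "d = 2 * real n * real q * \<sigma>h"
  have d: "d > 0" unfolding d_def using n q \<sigma>h by simp
  have fro_shift: "(fro n q (msub Y (matmul p X (shift_row Bh j t w))))\<^sup>2
      = (fro n q R)\<^sup>2 - 2 * t * W\<^sup>2 + t\<^sup>2 * real n * W\<^sup>2" for t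
    unfolding R_def w_def W_def by (rule fro_residual_shift_row[where Y = Y and B = Bh and X = X and n = n and j = j, OF j col])
  have "W \<le> lam * d / 2"
  proof (rule le_of_quadratic_perturbation)
    show "0 \<le> W" "0 < d" "0 \<le> lam"
      using lam d by (auto simp: W_def)
    fix t :: real assume t: "t > 0"
    have "(fro n q R)\<^sup>2 / d + \<sigma>h / 2 + lam * norm21 p q Bh
        \<le> (fro n q (msub Y (matmul p X (shift_row Bh j t w))))\<^sup>2 / d + \<sigma>h / 2 + lam * norm21 p q (shift_row Bh j t w)"
      using min unfolding smooth_obj_def R_def d_def by blast
    also have "\<dots> \<le> ((fro n q R)\<^sup>2 - 2 * t * W\<^sup>2 + t\<^sup>2 * real n * W\<^sup>2) / d + \<sigma>h / 2 + lam * (norm21 p q Bh + t * W)"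
      using norm21_shift_row_le[OF j, where t = t and B = Bh and q = q and w = w] t lam unfolding fro_shift W_def by simp
    also have "((fro n q R)\<^sup>2 - 2 * t * W\<^sup>2 + t\<^sup>2 * real n * W\<^sup>2) / d
        = (fro n q R)\<^sup>2 / d + (- 2 * t * W\<^sup>2 + t\<^sup>2 * real n * W\<^sup>2) / d"
      using d by (simp add: field_simps)
    finally show "0 \<le> (- 2 * t * W\<^sup>2 + t\<^sup>2 * real n * W\<^sup>2) / d + lam * t * W"
      by (simp add: algebra_simps)
  qed
  then show ?thesis unfolding W_def w_def R_def d_def by simp
qed

section \<open>The cone condition\<close>

lemma residual_inner_noise:
  "(\<Sum>i<n. \<Sum>k<q. msub (obs p X Bs E) (matmul p X B) i k * E (i, k))
     = (\<Sum>i<n. \<Sum>k<q. (E (i, k))\<^sup>2) - (\<Sum>j<p. \<Sum>k<q. msub B Bs j k * tmatmul n X (\<lambda>i k. E (i, k)) j k)"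
proof -
  have "(\<Sum>i<n. \<Sum>k<q. matmul p X (msub B Bs) i k * E (i, k))
      = (\<Sum>i<n. \<Sum>k<q. \<Sum>j<p. X i j * msub B Bs j k * E (i, k))"
    unfolding matmul_def by (simp add: sum_distrib_right)
  also have "\<dots> = (\<Sum>k<q. \<Sum>i<n. \<Sum>j<p. X i j * msub B Bs j k * E (i, k))" by (rule sum.swap)
  also have "\<dots> = (\<Sum>k<q. \<Sum>j<p. \<Sum>i<n. X i j * msub B Bs j k * E (i, k))"
    by (intro sum.cong refl sum.swap)
  also have "\<dots> = (\<Sum>j<p. \<Sum>k<q. \<Sum>i<n. X i j * msub B Bs j k * E (i, k))" by (rule sum.swap)
  also have "\<dots> = (\<Sum>j<p. \<Sum>k<q. msub B Bs j k * tmatmul n X (\<lambda>i k. E (i, k)) j k)"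
    unfolding tmatmul_def by (simp add: sum_distrib_left algebra_simps)
  finally show ?thesis
    unfolding residual_obs by (simp add: left_diff_distrib sum_subtractf power2_eq_square)
qed

lemma sum_row_inner_le_norm21:
  assumes "\<forall>j<p. L2_set (G j) {..<q} \<le> g"
  shows "(\<Sum>j<p. \<Sum>k<q. D j k * G j k) \<le> g * norm21 p q D"
proof -
  have "(\<Sum>j<p. \<Sum>k<q. D j k * G j k) \<le> (\<Sum>j<p. row_norm q D j * L2_set (G j) {..<q})"
    unfolding row_norm_eq_L2_set by (intro sum_mono sum_mult_le_L2_set)
  also have "\<dots> \<le> (\<Sum>j<p. row_norm q D j * g)"
    using assms by (intro sum_mono mult_left_mono) (auto simp: row_norm_nonneg)
  also have "\<dots> = g * norm21 p q D" unfolding norm21_def by (simp add: sum_distrib_left mult.commute)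
  finally show ?thesis .
qed

lemma sqrt_lasso_residual_ge:
  fixes E :: "nat \<times> nat \<Rightarrow> real"
  assumes n: "n \<ge> 1" and q: "q \<ge> 1" and lam: "lam > 0" and \<sigma>: "\<sigma> > 0"
    and corr: "\<forall>j<p. L2_set (tmatmul n X (\<lambda>i k. E (i, k)) j) {..<q} \<le> lam * (real n * real q) * \<sigma> / (2 * sqrt 2)"
    and energy: "real n * real q * \<sigma>\<^sup>2 / 2 \<le> (fro n q (\<lambda>i k. E (i, k)))\<^sup>2"
  shows "fro n q (\<lambda>i k. E (i, k)) - lam * sqrt (real n * real q) * norm21 p q (msub B Bs) / 2
           \<le> fro n q (msub (obs p X Bs E) (matmul p X B))"
proof -
  define N where "N = sqrt (real n * real q)"
  define e where "e = fro n q (\<lambda>i k. E (i, k))"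
  define \<rho> where "\<rho> = fro n q (msub (obs p X Bs E) (matmul p X B))"
  define d where "d = norm21 p q (msub B Bs)"
  define g where "g = lam * (real n * real q) * \<sigma> / (2 * sqrt 2)"
  have N: "N > 0" and N_sq: "N\<^sup>2 = real n * real q" unfolding N_def using n q by simp_all
  have d: "d \<ge> 0" unfolding d_def by (rule norm21_nonneg)
  have "(N * \<sigma> / sqrt 2)\<^sup>2 \<le> e\<^sup>2"
    using energy unfolding e_def by (simp add: power_mult_distrib power_divide N_sq)
  then have e_ge: "N * \<sigma> / sqrt 2 \<le> e"
    unfolding e_def by (rule power2_le_imp_le) (simp add: fro_nonneg)
  then have e: "e > 0" using N \<sigma> by (smt (verit) divide_pos_pos mult_pos_pos real_sqrt_gt_zero)
  have "g = lam * N * (N * \<sigma> / sqrt 2) / 2"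
    unfolding g_def N_sq[symmetric] by (simp add: power2_eq_square)
  also have "\<dots> \<le> lam * N * e / 2"
    using e_ge lam N by (intro divide_right_mono mult_left_mono) auto
  finally have g: "g \<le> lam * N * e / 2" .
  have "e\<^sup>2 - g * d \<le> (\<Sum>i<n. \<Sum>k<q. (E (i, k))\<^sup>2) - (\<Sum>j<p. \<Sum>k<q. msub B Bs j k * tmatmul n X (\<lambda>i k. E (i, k)) j k)"
    using sum_row_inner_le_norm21[OF corr, of "msub B Bs"] unfolding e_def fro_power2 d_def g_def by simp
  also have "\<dots> = (\<Sum>i<n. \<Sum>k<q. msub (obs p X Bs E) (matmul p X B) i k * E (i, k))"
    by (rule residual_inner_noise[symmetric])
  also have "\<dots> \<le> \<rho> * e" unfolding \<rho>_def e_def by (rule sum_inner_le_fro)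
  finally have "e * (e - lam * N * d / 2) \<le> e * \<rho>"
    using mult_right_mono[OF g d] by (simp add: power2_eq_square algebra_simps)
  then show ?thesis
    using e unfolding e_def \<rho>_def N_def d_def by simp
qed

lemma sqrt_lasso_cone:
  fixes E :: "nat \<times> nat \<Rightarrow> real"
  assumes n: "n \<ge> 1" and q: "q \<ge> 1" and lam: "lam > 0" and \<sigma>: "\<sigma> > 0"
    and corr: "\<forall>j<p. L2_set (tmatmul n X (\<lambda>i k. E (i, k)) j) {..<q} \<le> lam * (real n * real q) * \<sigma> / (2 * sqrt 2)"
    and energy: "real n * real q * \<sigma>\<^sup>2 / 2 \<le> (fro n q (\<lambda>i k. E (i, k)))\<^sup>2"
    and le_truth: "sqrt_lasso_obj n p q X (obs p X Bs E) lam Bh \<le> sqrt_lasso_obj n p q X (obs p X Bs E) lam Bs"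
  shows "norm21 p q Bh \<le> norm21 p q Bs + norm21 p q (msub Bh Bs) / 2"
proof -
  define N where "N = sqrt (real n * real q)"
  define d where "d = norm21 p q (msub Bh Bs)"
  have N: "N > 0" unfolding N_def using n q by simp
  have "lam * norm21 p q Bh
      \<le> lam * norm21 p q Bs + (fro n q (\<lambda>i k. E (i, k)) - fro n q (msub (obs p X Bs E) (matmul p X Bh))) / N"
    using le_truth unfolding sqrt_lasso_obj_def residual_obs_at_truth N_def[symmetric]
    by (simp add: diff_divide_distrib)
  also have "\<dots> \<le> lam * norm21 p q Bs + (lam * N * d / 2) / N"
    using sqrt_lasso_residual_ge[OF n q lam \<sigma> corr energy, where B = Bh and Bs = Bs] N
    unfolding N_def[symmetric] d_def by (intro add_left_mono divide_right_mono) auto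
  also have "\<dots> = lam * (norm21 p q Bs + d / 2)"
    using N by (simp add: algebra_simps)
  finally show ?thesis
    using lam unfolding d_def by simp
qed

lemma sqrt_lasso_residual_le:
  fixes E :: "nat \<times> nat \<Rightarrow> real"
  assumes n: "n \<ge> 1" and q: "q \<ge> 1" and lam: "lam > 0" and \<sigma>: "\<sigma> > 0"
    and energy: "(fro n q (\<lambda>i k. E (i, k)))\<^sup>2 \<le> 4 * (real n * real q) * \<sigma>\<^sup>2"
    and signal: "lam * norm21 p q Bs \<le> \<eta> * \<sigma>"
    and le_truth: "sqrt_lasso_obj n p q X (obs p X Bs E) lam Bh \<le> sqrt_lasso_obj n p q X (obs p X Bs E) lam Bs"
  shows "fro n q (msub (obs p X Bs E) (matmul p X Bh)) \<le> sqrt (real n * real q) * (2 + \<eta>) * \<sigma>"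
proof -
  define N where "N = sqrt (real n * real q)"
  define e where "e = fro n q (\<lambda>i k. E (i, k))"
  have N: "N > 0" unfolding N_def using n q by simp
  have e: "e \<le> 2 * N * \<sigma>"
  proof (rule power2_le_imp_le)
    show "e\<^sup>2 \<le> (2 * N * \<sigma>)\<^sup>2" using energy unfolding e_def N_def by (simp add: power_mult_distrib)
  qed (use N \<sigma> in simp)
  have "fro n q (msub (obs p X Bs E) (matmul p X Bh)) / N + lam * norm21 p q Bh \<le> e / N + lam * norm21 p q Bs"
    using le_truth unfolding sqrt_lasso_obj_def residual_obs_at_truth e_def N_def .
  then have "fro n q (msub (obs p X Bs E) (matmul p X Bh)) / N \<le> e / N + \<eta> * \<sigma>"
    using signal lam norm21_nonneg[of p q Bh] by (smt (verit) mult_nonneg_nonneg)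
  then have "fro n q (msub (obs p X Bs E) (matmul p X Bh)) \<le> e + N * \<eta> * \<sigma>"
    using N by (simp add: field_simps)
  also have "\<dots> \<le> N * (2 + \<eta>) * \<sigma>" using e by (simp add: algebra_simps)
  finally show ?thesis unfolding N_def .
qed

lemma sqrt_lasso_obj_le_smooth_obj:
  assumes "n \<ge> 1" "q \<ge> 1" "\<sigma> > 0"
  shows "sqrt_lasso_obj n p q X Y lam B \<le> smooth_obj n p q X Y lam B \<sigma>"
proof -
  define N where "N = sqrt (real n * real q)"
  define \<rho> where "\<rho> = fro n q (msub Y (matmul p X B))"
  have N: "N > 0" and N_sq: "N\<^sup>2 = real n * real q" unfolding N_def using assms by simp_all
  have "2 * \<sigma> * (\<rho> / N) \<le> (\<rho> / N)\<^sup>2 + \<sigma>\<^sup>2"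
    using zero_le_power2[of "\<rho> / N - \<sigma>"] by (simp add: power2_eq_square algebra_simps)
  then have "\<rho> / N \<le> ((\<rho> / N)\<^sup>2 + \<sigma>\<^sup>2) / (2 * \<sigma>)"
    using assms(3) by (simp add: field_simps)
  also have "\<dots> = \<rho>\<^sup>2 / (2 * real n * real q * \<sigma>) + \<sigma> / 2"
    using assms(3) N by (simp add: N_sq[symmetric] power_divide field_simps power2_eq_square)
  finally show ?thesis
    unfolding sqrt_lasso_obj_def smooth_obj_def N_def \<rho>_def by simp
qed

lemma smooth_obj_at_residual_scale:
  assumes "n \<ge> 1" "q \<ge> 1" "fro n q (msub Y (matmul p X B)) > 0"
  shows "smooth_obj n p q X Y lam B (fro n q (msub Y (matmul p X B)) / sqrt (real n * real q))
           = sqrt_lasso_obj n p q X Y lam B"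
proof -
  define N where "N = sqrt (real n * real q)"
  define \<rho> where "\<rho> = fro n q (msub Y (matmul p X B))"
  have N: "N > 0" and N_sq: "real n * real q = N\<^sup>2" unfolding N_def using assms by simp_all
  have "\<rho>\<^sup>2 / (2 * real n * real q * (\<rho> / N)) + \<rho> / N / 2 = \<rho> / N"
    using N assms(3) unfolding \<rho>_def[symmetric] mult.assoc N_sq
    by (simp add: power2_eq_square field_simps)
  then show ?thesis
    unfolding sqrt_lasso_obj_def smooth_obj_def N_def[symmetric] \<rho>_def[symmetric] by simp
qed

lemma smooth_min_sqrt_lasso_le_truth:
  fixes E :: "nat \<times> nat \<Rightarrow> real"
  assumes n: "n \<ge> 1" and q: "q \<ge> 1" and \<sigma>: "\<sigma> > 0"
    and energy: "real n * real q * \<sigma>\<^sup>2 / 2 \<le> (fro n q (\<lambda>i k. E (i, k)))\<^sup>2"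
    and \<sigma>min: "0 < \<sigma>min" "\<sigma>min \<le> \<sigma> / sqrt 2" and \<sigma>h: "\<sigma>min \<le> \<sigma>h"
    and min: "\<forall>B \<sigma>'. \<sigma>min \<le> \<sigma>' \<longrightarrow> smooth_obj n p q X (obs p X Bs E) lam Bh \<sigma>h \<le> smooth_obj n p q X (obs p X Bs E) lam B \<sigma>'"
  shows "sqrt_lasso_obj n p q X (obs p X Bs E) lam Bh \<le> sqrt_lasso_obj n p q X (obs p X Bs E) lam Bs"
proof -
  define N where "N = sqrt (real n * real q)"
  define e where "e = fro n q (\<lambda>i k. E (i, k))"
  have N: "N > 0" unfolding N_def using n q by simp
  have "(N * \<sigma> / sqrt 2)\<^sup>2 \<le> e\<^sup>2"
    using energy unfolding e_def by (simp add: power_mult_distrib power_divide N_def)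
  then have "N * \<sigma> / sqrt 2 \<le> e"
    unfolding e_def by (rule power2_le_imp_le) (simp add: fro_nonneg)
  then have e_ge: "\<sigma> / sqrt 2 \<le> e / N" using N by (simp add: field_simps)
  then have e: "e > 0" using N \<sigma> by (smt (verit) divide_pos_pos real_sqrt_gt_zero divide_nonpos_pos)
  have "sqrt_lasso_obj n p q X (obs p X Bs E) lam Bh \<le> smooth_obj n p q X (obs p X Bs E) lam Bh \<sigma>h"
    using \<sigma>min \<sigma>h by (intro sqrt_lasso_obj_le_smooth_obj[OF n q]) simp
  also have "\<dots> \<le> smooth_obj n p q X (obs p X Bs E) lam Bs (e / N)"
    using min \<sigma>min e_ge by simp
  also have "\<dots> = sqrt_lasso_obj n p q X (obs p X Bs E) lam Bs"
    using smooth_obj_at_residual_scale[OF n q, of "obs p X Bs E" p X Bs lam] e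
    unfolding residual_obs_at_truth e_def N_def by simp
  finally show ?thesis .
qed

lemma le_of_half_sum_le:
  fixes u m \<sigma> :: real
  assumes m: "m > 0" and u: "u \<le> m\<^sup>2" and \<sigma>: "\<sigma> > 0"
    and le: "u / (2 * \<sigma>) + \<sigma> / 2 \<le> u / (2 * m) + m / 2"
  shows "\<sigma> \<le> m"
proof (rule ccontr)
  assume "\<not> \<sigma> \<le> m"
  then have gt: "\<sigma> > m" by simp
  have "(u / (2 * \<sigma>) + \<sigma> / 2) * (2 * \<sigma> * m) \<le> (u / (2 * m) + m / 2) * (2 * \<sigma> * m)"
    using le \<sigma> m by (intro mult_right_mono) auto
  moreover have "(u / (2 * \<sigma>) + \<sigma> / 2) * (2 * \<sigma> * m) = u * m + \<sigma> * \<sigma> * m"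
    using \<sigma> by (simp add: field_simps)
  moreover have "(u / (2 * m) + m / 2) * (2 * \<sigma> * m) = u * \<sigma> + m * \<sigma> * m"
    using m by (simp add: field_simps)
  ultimately have "(\<sigma> - m) * (\<sigma> * m - u) \<le> 0"
    by (simp add: algebra_simps)
  moreover have "\<sigma> * m - u > 0"
    using u mult_strict_right_mono[OF gt m] by (simp add: power2_eq_square)
  ultimately show False
    using gt by (simp add: mult_le_0_iff)
qed

lemma smooth_min_scale_le:
  assumes n: "n \<ge> 1" and q: "q \<ge> 1" and \<sigma>min: "\<sigma>min > 0" and \<sigma>h: "\<sigma>min \<le> \<sigma>h"
    and min: "\<forall>\<sigma>'. \<sigma>min \<le> \<sigma>' \<longrightarrow> smooth_obj n p q X Y lam Bh \<sigma>h \<le> smooth_obj n p q X Y lam Bh \<sigma>'"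
  shows "\<sigma>h \<le> max \<sigma>min (fro n q (msub Y (matmul p X Bh)) / sqrt (real n * real q))"
proof -
  define N where "N = sqrt (real n * real q)"
  define \<rho> where "\<rho> = fro n q (msub Y (matmul p X Bh))"
  define m where "m = max \<sigma>min (\<rho> / N)"
  have N: "N > 0" and N_sq: "N\<^sup>2 = real n * real q" unfolding N_def using n q by simp_all
  have m: "m > 0" "\<sigma>min \<le> m" unfolding m_def using \<sigma>min by auto
  have obj: "smooth_obj n p q X Y lam Bh \<sigma>' = (\<rho>\<^sup>2 / N\<^sup>2) / (2 * \<sigma>') + \<sigma>' / 2 + lam * norm21 p q Bh" for \<sigma>'
    unfolding smooth_obj_def \<rho>_def[symmetric] N_sq by (simp add: mult.assoc)
  have "(\<rho> / N)\<^sup>2 \<le> m\<^sup>2"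
    unfolding m_def using N by (intro power_mono) (auto simp: \<rho>_def fro_nonneg)
  then have "\<sigma>h \<le> m"
    using min m \<sigma>min \<sigma>h by (intro le_of_half_sum_le[OF m(1)]) (auto simp: obj power_divide)
  then show ?thesis unfolding m_def \<rho>_def N_def .
qed

section \<open>Row-wise error bounds and support recovery\<close>

lemma row_norm_le_norm2inf: "j < p \<Longrightarrow> row_norm q M j \<le> norm2inf p q M"
  unfolding norm2inf_def by (rule Max_ge) auto

lemma norm2inf_le:
  assumes "p \<ge> 1" "\<forall>j<p. row_norm q M j \<le> b"
  shows "norm2inf p q M \<le> b"
proof -
  have "0 \<in> {..<p}" using assms(1) by simp
  then show ?thesis
    using assms(2) unfolding norm2inf_def by (subst Max_le_iff) auto
qed

lemma row_norm_diff_ge: "row_norm q Bs j - row_norm q (msub Bh Bs) j \<le> row_norm q Bh j"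
  using L2_set_diff_triangle_ineq[of "Bh j" "msub Bh Bs j" "{..<q}"]
  by (simp add: row_norm_eq_L2_set msub_def)

lemma row_norm_diff_of_zero:
  assumes "row_norm q Bs j = 0"
  shows "row_norm q (msub Bh Bs) j = row_norm q Bh j"
proof -
  have "\<forall>k<q. Bs j k = 0"
    using assms L2_set_eq_0_iff[of "{..<q}" "Bs j"] by (simp add: row_norm_eq_L2_set)
  then show ?thesis
    unfolding row_norm_eq_L2_set msub_def by (intro L2_set_cong) auto
qed

lemma norm21_diff_le_support_sum:
  assumes cone: "norm21 p q Bh \<le> norm21 p q Bs + norm21 p q (msub Bh Bs) / 2"
  shows "norm21 p q (msub Bh Bs) \<le> 4 * (\<Sum>j\<in>{j. j < p \<and> row_norm q Bs j \<noteq> 0}. row_norm q (msub Bh Bs) j)"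
proof -
  let ?r = "row_norm q (msub Bh Bs)" and ?in_S = "\<lambda>j. row_norm q Bs j \<noteq> 0"
  have "row_norm q Bs j + ?r j - 2 * (if ?in_S j then ?r j else 0) \<le> row_norm q Bh j" for j
  proof (cases "?in_S j")
    case True
    then show ?thesis using row_norm_diff_ge[where Bs = Bs and Bh = Bh and q = q and j = j] by simp
  next
    case False
    then show ?thesis using row_norm_diff_of_zero[where Bs = Bs and Bh = Bh and q = q and j = j] by simp
  qed
  then have "(\<Sum>j<p. row_norm q Bs j + ?r j - 2 * (if ?in_S j then ?r j else 0)) \<le> norm21 p q Bh"
    unfolding norm21_def by (intro sum_mono)
  moreover have "(\<Sum>j<p. if ?in_S j then ?r j else 0) = (\<Sum>j\<in>{j. j < p \<and> ?in_S j}. ?r j)"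
    using sum.inter_filter[of "{..<p}" ?r ?in_S] by (simp add: conj_commute)
  ultimately have "norm21 p q Bs + norm21 p q (msub Bh Bs) - 2 * (\<Sum>j\<in>{j. j < p \<and> ?in_S j}. ?r j) \<le> norm21 p q Bh"
    unfolding norm21_def by (simp add: sum.distrib sum_subtractf flip: sum_distrib_left)
  then show ?thesis using cone by linarith
qed

lemma norm21_diff_le_sparsity_norm2inf:
  assumes p: "p \<ge> 1"
    and cone: "norm21 p q Bh \<le> norm21 p q Bs + norm21 p q (msub Bh Bs) / 2"
    and sparse: "card {j. j < p \<and> row_norm q Bs j \<noteq> 0} \<le> s"
  shows "norm21 p q (msub Bh Bs) \<le> 4 * real s * norm2inf p q (msub Bh Bs)"
proof -
  let ?S = "{j. j < p \<and> row_norm q Bs j \<noteq> 0}" and ?D = "msub Bh Bs"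
  have M: "norm2inf p q ?D \<ge> 0"
    using row_norm_le_norm2inf[of 0 p q ?D] row_norm_nonneg[of q ?D 0] p by simp
  have "norm21 p q ?D \<le> 4 * (\<Sum>j\<in>?S. row_norm q ?D j)"
    by (rule norm21_diff_le_support_sum[OF cone])
  also have "(\<Sum>j\<in>?S. row_norm q ?D j) \<le> real (card ?S) * norm2inf p q ?D"
    using sum_bounded_above[of ?S "row_norm q ?D" "norm2inf p q ?D"] row_norm_le_norm2inf by auto
  also have "\<dots> \<le> real s * norm2inf p q ?D"
    using sparse M by (intro mult_right_mono) auto
  finally show ?thesis by simp
qed

text \<open>The constant C is an upper bound for 1 / (1 - 4/(7\<alpha>)).\<close>

lemma absorb_contraction:
  fixes M T \<alpha> C :: real
  assumes \<alpha>: "\<alpha> > 1" and T: "T \<ge> 0" and rec: "M \<le> T + 4 / (7 * \<alpha>) * M"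
    and C: "C = 1 + 16 / (7 * (\<alpha> - 1))"
  shows "M \<le> C * T"
proof -
  have "7 * \<alpha> * M \<le> 7 * \<alpha> * (T + 4 / (7 * \<alpha>) * M)" using rec \<alpha> by (intro mult_left_mono) auto
  also have "\<dots> = 7 * \<alpha> * T + 4 * M" using \<alpha> by (simp add: algebra_simps)
  finally have "M * (7 * \<alpha> - 4) \<le> 7 * \<alpha> * T" by (simp add: algebra_simps)
  also have "7 * \<alpha> \<le> C * (7 * \<alpha> - 4)"
  proof -
    have "C * (7 * \<alpha> - 7) = 7 * \<alpha> + 9" and "C > 0"
      unfolding C using \<alpha> by (simp_all add: field_simps add_pos_pos)
    moreover have "C * (7 * \<alpha> - 4) = C * (7 * \<alpha> - 7) + 3 * C" by (simp add: algebra_simps)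
    ultimately show ?thesis by linarith
  qed
  then have "7 * \<alpha> * T \<le> C * (7 * \<alpha> - 4) * T" using T by (intro mult_right_mono) auto
  finally have "M * (7 * \<alpha> - 4) \<le> (C * T) * (7 * \<alpha> - 4)" by (simp add: algebra_simps)
  then show ?thesis using \<alpha> by simp
qed

lemma good_estimate_of_row_error:
  assumes p: "p \<ge> 1" and q: "q \<ge> 1" and rows: "\<forall>j<p. row_norm q (msub Bh Bs) j \<le> real q * t"
  shows "good_estimate p q Bs Bh t"
  unfolding good_estimate_def
proof (intro conjI impI)
  show "norm2inf p q (msub Bh Bs) / real q \<le> t"
    using norm2inf_le[OF p rows] q by (simp add: divide_le_eq mult.commute)
  assume sep: "\<forall>j<p. row_norm q Bs j \<noteq> 0 \<longrightarrow> 2 * t < row_norm q Bs j / real q"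
  show "{j. j < p \<and> t < row_norm q Bh j / real q} = {j. j < p \<and> row_norm q Bs j \<noteq> 0}"
  proof (intro set_eqI iffI)
    fix j assume "j \<in> {j. j < p \<and> t < row_norm q Bh j / real q}"
    then have j: "j < p" and large: "real q * t < row_norm q Bh j"
      using q by (auto simp: less_divide_eq mult.commute)
    have "row_norm q Bs j \<noteq> 0"
      using row_norm_diff_of_zero[where Bs = Bs and Bh = Bh and q = q and j = j] rows j large by auto
    then show "j \<in> {j. j < p \<and> row_norm q Bs j \<noteq> 0}" using j by simp
  next
    fix j assume "j \<in> {j. j < p \<and> row_norm q Bs j \<noteq> 0}"
    then have j: "j < p" and "row_norm q Bs j \<noteq> 0" by auto
    then have "2 * (real q * t) < row_norm q Bs j" using sep q by (simp add: less_divide_eq algebra_simps)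
    then have "real q * t < row_norm q Bh j"
      using row_norm_diff_ge[where Bs = Bs and Bh = Bh and q = q and j = j] rows j by auto
    then show "j \<in> {j. j < p \<and> t < row_norm q Bh j / real q}"
      using j q by (simp add: less_divide_eq mult.commute)
  qed
qed

section \<open>The noise event\<close>

definition noise_event :: "nat \<Rightarrow> nat \<Rightarrow> nat \<Rightarrow> (nat \<Rightarrow> nat \<Rightarrow> real) \<Rightarrow> real \<Rightarrow> real \<Rightarrow> (nat \<times> nat \<Rightarrow> real) set" where
  "noise_event n p q X lam \<sigma> = {E.
     (\<forall>j<p. L2_set (tmatmul n X (\<lambda>i k. E (i, k)) j) {..<q} \<le> lam * (real n * real q) * \<sigma> / (2 * sqrt 2)) \<and>
     real n * real q * \<sigma>\<^sup>2 / 2 \<le> (fro n q (\<lambda>i k. E (i, k)))\<^sup>2 \<and>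
     (fro n q (\<lambda>i k. E (i, k)))\<^sup>2 \<le> 4 * (real n * real q) * \<sigma>\<^sup>2}"

lemma noise_event_of_energy_bounds:
  assumes n: "n \<ge> 1" and q: "q \<ge> 1" and \<sigma>: "\<sigma> > 0" and r: "r \<ge> 0"
    and lam: "lam = 2 * sqrt 2 / sqrt (real n * real q) * r"
    and columns: "\<forall>j<p. (\<Sum>k<q. (\<Sum>i<n. X i j * E (i, k))\<^sup>2) \<le> \<sigma>\<^sup>2 * real n * real q * r\<^sup>2"
    and lower: "real n * real q * \<sigma>\<^sup>2 / 2 \<le> (\<Sum>ik\<in>{..<n} \<times> {..<q}. (E ik)\<^sup>2)"
    and upper: "(\<Sum>ik\<in>{..<n} \<times> {..<q}. (E ik)\<^sup>2) \<le> 4 * (real n * real q) * \<sigma>\<^sup>2"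
  shows "E \<in> noise_event n p q X lam \<sigma>"
proof -
  have fro_sq: "(fro n q (\<lambda>i k. E (i, k)))\<^sup>2 = (\<Sum>ik\<in>{..<n} \<times> {..<q}. (E ik)\<^sup>2)"
    by (simp add: fro_power2 sum.cartesian_product)
  have threshold: "lam * (real n * real q) * \<sigma> / (2 * sqrt 2) = sqrt (real n * real q) * \<sigma> * r"
  proof -
    have "lam * (real n * real q) * \<sigma> / (2 * sqrt 2) = r * \<sigma> * ((real n * real q) / sqrt (real n * real q))"
      unfolding lam by (simp add: field_simps)
    also have "(real n * real q) / sqrt (real n * real q) = sqrt (real n * real q)"
      by (rule real_div_sqrt) simp
    finally show ?thesis by (simp add: algebra_simps)
  qed
  have "L2_set (tmatmul n X (\<lambda>i k. E (i, k)) j) {..<q} \<le> lam * (real n * real q) * \<sigma> / (2 * sqrt 2)"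
    if j: "j < p" for j
  proof -
    have "L2_set (tmatmul n X (\<lambda>i k. E (i, k)) j) {..<q} = sqrt (\<Sum>k<q. (\<Sum>i<n. X i j * E (i, k))\<^sup>2)"
      unfolding L2_set_def tmatmul_def ..
    also have "\<dots> \<le> sqrt (\<sigma>\<^sup>2 * real n * real q * r\<^sup>2)"
      using columns j by simp
    also have "\<dots> = sqrt (real n * real q) * \<sigma> * r"
      using \<sigma> r by (simp add: real_sqrt_mult)
    finally show ?thesis unfolding threshold .
  qed
  then show ?thesis
    using lower upper unfolding noise_event_def mem_Collect_eq fro_sq by simp
qed

locale incoherent_design =
  fixes n p q s :: nat and X :: "nat \<Rightarrow> nat \<Rightarrow> real" and \<alpha> :: real
  assumes n_ge_1: "n \<ge> 1" and p_ge_1: "p \<ge> 1" and q_ge_1: "q \<ge> 1" and s_ge_1: "s \<ge> 1"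
    and \<alpha>_gt_1: "\<alpha> > 1"
    and gram_diag: "\<forall>j<p. gram n X j j = 1"
    and gram_offdiag: "\<forall>j<p. \<forall>j'<p. j' \<noteq> j \<longrightarrow> \<bar>gram n X j j'\<bar> \<le> 1 / (7 * \<alpha> * real s)"
begin

lemma sum_power2_column: "j < p \<Longrightarrow> (\<Sum>i<n. (X i j)\<^sup>2) = real n"
  using sum_power2_column_eq[OF n_ge_1] gram_diag by blast

lemma measure_column_tails_le:
  assumes \<sigma>: "\<sigma> > 0" and p: "p \<ge> 2" and A: "A > 0"
  defines "r \<equiv> 1 + A * sqrt (ln (real p) / real q)"
  shows "measure (noise_measure n q \<sigma>)
           (\<Union>j<p. {\<omega> \<in> space (noise_measure n q \<sigma>). \<sigma>\<^sup>2 * real n * real q * r\<^sup>2 \<le> (\<Sum>k<q. (\<Sum>i<n. X i j * \<omega> (i, k))\<^sup>2)})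
         \<le> real p powr (1 - A\<^sup>2 / 2)"
proof -
  let ?M = "noise_measure n q \<sigma>"
  let ?tail = "\<lambda>j. {\<omega> \<in> space ?M. \<sigma>\<^sup>2 * real n * real q * r\<^sup>2 \<le> (\<Sum>k<q. (\<Sum>i<n. X i j * \<omega> (i, k))\<^sup>2)}"
  interpret prob_space ?M
    unfolding noise_measure_def using prob_space_normal_density[OF \<sigma>] by (intro prob_space_PiM) auto
  have ln_p: "ln (real p) > 0" using p by simp
  have r: "r > 1" unfolding r_def using A ln_p q_ge_1 by simp
  have tail_sets: "?tail j \<in> sets ?M" for j
    unfolding noise_measure_def by measurable
  have exponent: "exp (- real q * (r - 1)\<^sup>2 / 2) = real p powr (- A\<^sup>2 / 2)"
  proof -
    have "- real q * (r - 1)\<^sup>2 / 2 = - A\<^sup>2 / 2 * ln (real p)"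
      unfolding r_def using ln_p q_ge_1 by (simp add: power_mult_distrib field_simps)
    then show ?thesis using p by (simp add: powr_def)
  qed
  have "measure ?M (?tail j) \<le> real p powr (- A\<^sup>2 / 2)" if j: "j < p" for j
  proof -
    have "emeasure ?M (?tail j) \<le> ennreal (exp (- real q * (r - 1)\<^sup>2 / 2))"
      using column_energy_upper_tail[OF \<sigma> n_ge_1 q_ge_1 sum_power2_column[OF j] _ r] n_ge_1
      unfolding noise_measure_def by simp
    then show ?thesis
      unfolding exponent by (simp add: emeasure_eq_measure)
  qed
  then have "(\<Sum>j<p. measure ?M (?tail j)) \<le> (\<Sum>j<p. real p powr (- A\<^sup>2 / 2))"
    by (intro sum_mono) simp
  moreover have "measure ?M (\<Union>j<p. ?tail j) \<le> (\<Sum>j<p. measure ?M (?tail j))"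
    by (rule finite_measure_subadditive_finite) (use tail_sets in auto)
  ultimately have "measure ?M (\<Union>j<p. ?tail j) \<le> (\<Sum>j<p. real p powr (- A\<^sup>2 / 2))"
    by linarith
  also have "\<dots> = real p powr (1 - A\<^sup>2 / 2)"
    using p by (simp add: powr_add[of "real p" 1 "- A\<^sup>2 / 2", simplified])
  finally show ?thesis .
qed

lemma prob_noise_event:
  assumes \<sigma>: "\<sigma> > 0" and A: "A > sqrt 2"
    and lam: "lam = 2 * sqrt 2 / sqrt (real n * real q) * (1 + A * sqrt (ln (real p) / real q))"
  shows "\<exists>\<Omega> \<in> sets (noise_measure n q \<sigma>). \<Omega> \<subseteq> noise_event n p q X lam \<sigma> \<and>
           1 - real p powr (1 - A\<^sup>2 / 2) - (1 + exp 2) * exp (- (real n * real q) / 24)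
             \<le> measure (noise_measure n q \<sigma>) \<Omega>"
proof (cases "p = 1")
  case True
  then have "1 - real p powr (1 - A\<^sup>2 / 2) - (1 + exp 2) * exp (- (real n * real q) / 24) \<le> 0"
    by (simp add: add_pos_pos)
  then show ?thesis by (intro bexI[of _ "{}"]) auto
next
  case False
  let ?M = "noise_measure n q \<sigma>" and ?I = "{..<n} \<times> {..<q}"
  define r where "r = 1 + A * sqrt (ln (real p) / real q)"
  define columns where "columns = (\<Union>j<p. {\<omega> \<in> space ?M. \<sigma>\<^sup>2 * real n * real q * r\<^sup>2 \<le> (\<Sum>k<q. (\<Sum>i<n. X i j * \<omega> (i, k))\<^sup>2)})"
  define energy where "energy = {\<omega> \<in> space ?M. (\<Sum>ik\<in>?I. (\<omega> ik)\<^sup>2) \<le> real (card ?I) * \<sigma>\<^sup>2 / 2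
                                          \<or> 4 * real (card ?I) * \<sigma>\<^sup>2 \<le> (\<Sum>ik\<in>?I. (\<omega> ik)\<^sup>2)}"
  interpret prob_space ?M
    unfolding noise_measure_def using prob_space_normal_density[OF \<sigma>] by (intro prob_space_PiM) auto
  have A_pos: "A > 0" using less_trans[of 0 "sqrt 2" A] A by simp
  have sets: "columns \<in> sets ?M" "energy \<in> sets ?M"
    unfolding columns_def energy_def noise_measure_def by measurable
  have "measure ?M columns \<le> real p powr (1 - A\<^sup>2 / 2)"
    unfolding columns_def r_def using False p_ge_1 by (intro measure_column_tails_le[OF \<sigma> _ A_pos]) simp
  moreover have "measure ?M energy \<le> 2 * exp (- (real n * real q) / 24)"
    using measure_total_energy_tails_le[OF _ \<sigma>, of ?I]
    unfolding energy_def noise_measure_def by (simp add: card_cartesian_product)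
  moreover have "2 * exp (- (real n * real q) / 24) \<le> (1 + exp 2) * exp (- (real n * real q) / 24)"
    by (intro mult_right_mono) simp_all
  ultimately have "1 - real p powr (1 - A\<^sup>2 / 2) - (1 + exp 2) * exp (- (real n * real q) / 24)
      \<le> 1 - measure ?M (columns \<union> energy)"
    using measure_Un_le[OF sets] by linarith
  also have "\<dots> = measure ?M (space ?M - (columns \<union> energy))"
    using sets by (intro prob_compl[symmetric]) auto
  finally have prob: "1 - real p powr (1 - A\<^sup>2 / 2) - (1 + exp 2) * exp (- (real n * real q) / 24)
      \<le> measure ?M (space ?M - (columns \<union> energy))" .
  have "space ?M - (columns \<union> energy) \<subseteq> noise_event n p q X lam \<sigma>"
  proof
    fix E assume E: "E \<in> space ?M - (columns \<union> energy)"
    have "\<forall>j<p. (\<Sum>k<q. (\<Sum>i<n. X i j * E (i, k))\<^sup>2) \<le> \<sigma>\<^sup>2 * real n * real q * r\<^sup>2"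
      using E unfolding columns_def by (auto simp: not_le intro: less_imp_le)
    moreover have "real n * real q * \<sigma>\<^sup>2 / 2 \<le> (\<Sum>ik\<in>?I. (E ik)\<^sup>2)"
      and "(\<Sum>ik\<in>?I. (E ik)\<^sup>2) \<le> 4 * (real n * real q) * \<sigma>\<^sup>2"
      using E unfolding energy_def by (auto simp: card_cartesian_product)
    moreover have "r \<ge> 0" unfolding r_def using A_pos p_ge_1 by simp
    ultimately show "E \<in> noise_event n p q X lam \<sigma>"
      using lam unfolding r_def[symmetric] by (intro noise_event_of_energy_bounds[OF n_ge_1 q_ge_1 \<sigma>])
  qed
  with prob sets show ?thesis by blast
qed

lemma good_estimate_of_cone:
  assumes sparse: "card {j. j < p \<and> row_norm q Bs j \<noteq> 0} \<le> s"
    and C: "C = 1 + 16 / (7 * (\<alpha> - 1))" and t: "t \<ge> 0"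
    and cone: "norm21 p q Bh \<le> norm21 p q Bs + norm21 p q (msub Bh Bs) / 2"
    and corr: "\<forall>j<p. L2_set (tmatmul n X (\<lambda>i k. E (i, k)) j) {..<q}
                   + L2_set (tmatmul n X (msub (obs p X Bs E) (matmul p X Bh)) j) {..<q}
                 \<le> real n * real q * t"
  shows "good_estimate p q Bs Bh (C * t)"
proof -
  define D where "D = msub Bh Bs"
  define M where "M = norm2inf p q D"
  have rows_le_M: "j < p \<Longrightarrow> row_norm q D j \<le> M" for j
    unfolding M_def by (rule row_norm_le_norm2inf)
  have l21: "norm21 p q D \<le> 4 * real s * M"
    unfolding D_def M_def by (rule norm21_diff_le_sparsity_norm2inf[OF p_ge_1 cone sparse])
  have "row_norm q D j \<le> real q * t + 4 / (7 * \<alpha>) * M" if j: "j < p" for j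
  proof -
    have "row_norm q D j
        \<le> (L2_set (tmatmul n X (\<lambda>i k. E (i, k)) j) {..<q}
           + L2_set (tmatmul n X (msub (obs p X Bs E) (matmul p X Bh)) j) {..<q}) / real n
          + 1 / (7 * \<alpha> * real s) * norm21 p q D"
      unfolding D_def
      by (rule row_norm_error_le[OF n_ge_1 j]) (use gram_diag gram_offdiag j \<alpha>_gt_1 in auto)
    also have "\<dots> \<le> real q * t + 1 / (7 * \<alpha> * real s) * (4 * real s * M)"
      using corr j l21 n_ge_1 \<alpha>_gt_1 s_ge_1
      by (intro add_mono mult_left_mono) (auto simp: divide_le_eq algebra_simps)
    also have "\<dots> = real q * t + 4 / (7 * \<alpha>) * M"
      using s_ge_1 by simp
    finally show ?thesis .
  qed
  then have "M \<le> real q * t + 4 / (7 * \<alpha>) * M"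
    unfolding M_def by (intro norm2inf_le[OF p_ge_1]) auto
  with t have "M \<le> C * (real q * t)"
    by (intro absorb_contraction[OF \<alpha>_gt_1 _ _ C]) simp_all
  then show ?thesis
    using rows_le_M unfolding D_def
    by (intro good_estimate_of_row_error[OF p_ge_1 q_ge_1]) (auto simp: algebra_simps intro: order.trans)
qed

lemma good_estimate_on_noise_event:
  assumes sparse: "card {j. j < p \<and> row_norm q Bs j \<noteq> 0} \<le> s"
    and C: "C = 1 + 16 / (7 * (\<alpha> - 1))"
    and lam: "lam > 0" and \<sigma>: "\<sigma> > 0" and \<eta>: "\<eta> \<ge> 0"
    and E: "E \<in> noise_event n p q X lam \<sigma>"
    and le_truth: "sqrt_lasso_obj n p q X (obs p X Bs E) lam Bh \<le> sqrt_lasso_obj n p q X (obs p X Bs E) lam Bs"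
    and resid: "\<forall>j<p. L2_set (tmatmul n X (msub (obs p X Bs E) (matmul p X Bh)) j) {..<q}
                  \<le> lam * (real n * real q) * (2 + \<eta>) * \<sigma>"
  shows "good_estimate p q Bs Bh (C * (3 + \<eta>) * lam * \<sigma>)"
proof -
  have corr: "\<forall>j<p. L2_set (tmatmul n X (\<lambda>i k. E (i, k)) j) {..<q} \<le> lam * (real n * real q) * \<sigma> / (2 * sqrt 2)"
    and energy: "real n * real q * \<sigma>\<^sup>2 / 2 \<le> (fro n q (\<lambda>i k. E (i, k)))\<^sup>2"
    using E by (auto simp: noise_event_def)
  have "lam * (real n * real q) * \<sigma> * 1 \<le> lam * (real n * real q) * \<sigma> * (2 * sqrt 2)"
    using lam \<sigma> by (intro mult_left_mono) (auto intro: order.trans[of _ "sqrt 2"])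
  then have "lam * (real n * real q) * \<sigma> / (2 * sqrt 2) \<le> lam * (real n * real q) * \<sigma>"
    by (simp add: divide_le_eq)
  then have "\<forall>j<p. L2_set (tmatmul n X (\<lambda>i k. E (i, k)) j) {..<q}
                   + L2_set (tmatmul n X (msub (obs p X Bs E) (matmul p X Bh)) j) {..<q}
                 \<le> real n * real q * ((3 + \<eta>) * lam * \<sigma>)"
    using corr resid by (force simp: algebra_simps)
  from good_estimate_of_cone[OF sparse C _ sqrt_lasso_cone[OF n_ge_1 q_ge_1 lam \<sigma> corr energy le_truth] this]
  show ?thesis using lam \<sigma> \<eta> by (simp add: mult.assoc)
qed

lemma sqrt_lasso_good_estimate:
  assumes sparse: "card {j. j < p \<and> row_norm q Bs j \<noteq> 0} \<le> s"
    and C: "C = 1 + 16 / (7 * (\<alpha> - 1))"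
    and lam: "lam > 0" and \<sigma>: "\<sigma> > 0" and \<eta>: "\<eta> \<ge> 0"
    and signal: "lam * norm21 p q Bs \<le> \<eta> * \<sigma>"
    and E: "E \<in> noise_event n p q X lam \<sigma>"
    and min: "\<forall>B. sqrt_lasso_obj n p q X (obs p X Bs E) lam Bh \<le> sqrt_lasso_obj n p q X (obs p X Bs E) lam B"
  shows "good_estimate p q Bs Bh (C * (3 + \<eta>) * lam * \<sigma>)"
proof (rule good_estimate_on_noise_event[OF sparse C lam \<sigma> \<eta> E])
  show le_truth: "sqrt_lasso_obj n p q X (obs p X Bs E) lam Bh \<le> sqrt_lasso_obj n p q X (obs p X Bs E) lam Bs"
    using min by blast
  have energy: "(fro n q (\<lambda>i k. E (i, k)))\<^sup>2 \<le> 4 * (real n * real q) * \<sigma>\<^sup>2"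
    using E by (simp add: noise_event_def)
  show "\<forall>j<p. L2_set (tmatmul n X (msub (obs p X Bs E) (matmul p X Bh)) j) {..<q}
          \<le> lam * (real n * real q) * (2 + \<eta>) * \<sigma>"
  proof (intro allI impI)
    fix j assume j: "j < p"
    have "L2_set (tmatmul n X (msub (obs p X Bs E) (matmul p X Bh)) j) {..<q}
        \<le> lam * sqrt (real n * real q) * fro n q (msub (obs p X Bs E) (matmul p X Bh))"
      by (rule sqrt_lasso_min_row_correlation[OF n_ge_1 q_ge_1 lam j sum_power2_column[OF j] min])
    also have "\<dots> \<le> lam * sqrt (real n * real q) * (sqrt (real n * real q) * (2 + \<eta>) * \<sigma>)"
      using sqrt_lasso_residual_le[OF n_ge_1 q_ge_1 lam \<sigma> energy signal le_truth] lam
      by (intro mult_left_mono) auto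
    also have "\<dots> = lam * (real n * real q) * (2 + \<eta>) * \<sigma>"
      by (simp add: algebra_simps)
    finally show "L2_set (tmatmul n X (msub (obs p X Bs E) (matmul p X Bh)) j) {..<q}
        \<le> lam * (real n * real q) * (2 + \<eta>) * \<sigma>" .
  qed
qed

lemma smooth_sqrt_lasso_good_estimate:
  assumes sparse: "card {j. j < p \<and> row_norm q Bs j \<noteq> 0} \<le> s"
    and C: "C = 1 + 16 / (7 * (\<alpha> - 1))"
    and lam: "lam > 0" and \<sigma>: "\<sigma> > 0" and \<eta>: "\<eta> \<ge> 0"
    and signal: "lam * norm21 p q Bs \<le> \<eta> * \<sigma>"
    and \<sigma>min: "0 < \<sigma>min" "\<sigma>min \<le> \<sigma> / sqrt 2" and \<sigma>h: "\<sigma>min \<le> \<sigma>h"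
    and E: "E \<in> noise_event n p q X lam \<sigma>"
    and min: "\<forall>B \<sigma>'. \<sigma>min \<le> \<sigma>' \<longrightarrow> smooth_obj n p q X (obs p X Bs E) lam Bh \<sigma>h \<le> smooth_obj n p q X (obs p X Bs E) lam B \<sigma>'"
  shows "good_estimate p q Bs Bh (C * (3 + \<eta>) * lam * \<sigma>)"
proof (rule good_estimate_on_noise_event[OF sparse C lam \<sigma> \<eta> E])
  have energy_lower: "real n * real q * \<sigma>\<^sup>2 / 2 \<le> (fro n q (\<lambda>i k. E (i, k)))\<^sup>2"
    and energy_upper: "(fro n q (\<lambda>i k. E (i, k)))\<^sup>2 \<le> 4 * (real n * real q) * \<sigma>\<^sup>2"
    using E by (simp_all add: noise_event_def)
  show le_truth: "sqrt_lasso_obj n p q X (obs p X Bs E) lam Bh \<le> sqrt_lasso_obj n p q X (obs p X Bs E) lam Bs"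
    by (rule smooth_min_sqrt_lasso_le_truth[OF n_ge_1 q_ge_1 \<sigma> energy_lower \<sigma>min \<sigma>h min])
  define N where "N = sqrt (real n * real q)"
  have N: "N > 0" unfolding N_def using n_ge_1 q_ge_1 by simp
  have "\<sigma>h \<le> max \<sigma>min (fro n q (msub (obs p X Bs E) (matmul p X Bh)) / N)"
    unfolding N_def using min by (intro smooth_min_scale_le[OF n_ge_1 q_ge_1 \<sigma>min(1) \<sigma>h]) blast
  also have "\<dots> \<le> (2 + \<eta>) * \<sigma>"
  proof (rule max.boundedI)
    have "\<sigma> / sqrt 2 \<le> \<sigma>" using \<sigma> by (simp add: divide_le_eq)
    then show "\<sigma>min \<le> (2 + \<eta>) * \<sigma>" using \<sigma>min \<sigma> \<eta> by (smt (verit) mult_le_cancel_right1)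
    show "fro n q (msub (obs p X Bs E) (matmul p X Bh)) / N \<le> (2 + \<eta>) * \<sigma>"
      using sqrt_lasso_residual_le[OF n_ge_1 q_ge_1 lam \<sigma> energy_upper signal le_truth] N
      unfolding N_def[symmetric] by (simp add: divide_le_eq algebra_simps)
  qed
  finally have \<sigma>h_le: "\<sigma>h \<le> (2 + \<eta>) * \<sigma>" .
  show "\<forall>j<p. L2_set (tmatmul n X (msub (obs p X Bs E) (matmul p X Bh)) j) {..<q}
          \<le> lam * (real n * real q) * (2 + \<eta>) * \<sigma>"
  proof (intro allI impI)
    fix j assume j: "j < p"
    have "L2_set (tmatmul n X (msub (obs p X Bs E) (matmul p X Bh)) j) {..<q} \<le> lam * (real n * real q * \<sigma>h)"
      using min \<sigma>h \<sigma>min(1)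
      by (intro smooth_min_row_correlation[where X = X and n = n and j = j, OF n_ge_1 q_ge_1 lam j sum_power2_column[OF j]]) auto
    also have "\<dots> \<le> lam * (real n * real q * ((2 + \<eta>) * \<sigma>))"
      using \<sigma>h_le lam by (intro mult_left_mono) auto
    finally show "L2_set (tmatmul n X (msub (obs p X Bs E) (matmul p X Bh)) j) {..<q}
        \<le> lam * (real n * real q) * (2 + \<eta>) * \<sigma>"
      by (simp add: algebra_simps)
  qed
qed

end

theorem proposition2:
  fixes n p q s :: nat
    and X Bs :: "nat \<Rightarrow> nat \<Rightarrow> real"
    and \<sigma>s \<alpha> A \<eta> \<sigma>min lam C :: real
  assumes "n \<ge> 1" "p \<ge> 1" "q \<ge> 1"
    and "\<sigma>s > 0"
    and "s \<ge> 1" "card {j. j < p \<and> row_norm q Bs j \<noteq> 0} \<le> s"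
    and "\<alpha> > 1"
    and "\<forall>j<p. gram n X j j = 1"
    and "\<forall>j<p. \<forall>j'<p. j' \<noteq> j \<longrightarrow> \<bar>gram n X j j'\<bar> \<le> 1 / (7 * \<alpha> * real s)"
    and "A > sqrt 2"
    and "lam = 2 * sqrt 2 / sqrt (real n * real q) * (1 + A * sqrt (ln (real p) / real q))"
    and "\<eta> > 0" "lam * norm21 p q Bs \<le> \<eta> * \<sigma>s"
    and "0 < \<sigma>min" "\<sigma>min \<le> \<sigma>s / sqrt 2"
    and "C = 1 + 16 / (7 * (\<alpha> - 1))"
  shows "\<exists>\<Omega> \<in> sets (noise_measure n q \<sigma>s).
           measure (noise_measure n q \<sigma>s) \<Omega>
             \<ge> 1 - real p powr (1 - A\<^sup>2 / 2) - (1 + exp 2) * exp (- (real n * real q) / 24)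
         \<and> (\<forall>E \<in> \<Omega>.
              (\<forall>Bh. (\<forall>B. sqrt_lasso_obj n p q X (obs p X Bs E) lam Bh
                          \<le> sqrt_lasso_obj n p q X (obs p X Bs E) lam B)
                 \<longrightarrow> good_estimate p q Bs Bh (C * (3 + \<eta>) * lam * \<sigma>s))
            \<and> (\<forall>Bh \<sigma>h. \<sigma>h \<ge> \<sigma>min \<and>
                   (\<forall>B \<sigma>. \<sigma> \<ge> \<sigma>min \<longrightarrow> smooth_obj n p q X (obs p X Bs E) lam Bh \<sigma>h
                          \<le> smooth_obj n p q X (obs p X Bs E) lam B \<sigma>)
                 \<longrightarrow> good_estimate p q Bs Bh (C * (3 + \<eta>) * lam * \<sigma>s)))"
proof -
  interpret incoherent_design n p q s X \<alpha>
    using assms(1-3,5,7-9) by unfold_locales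
  obtain \<Omega> where \<Omega>: "\<Omega> \<in> sets (noise_measure n q \<sigma>s)" "\<Omega> \<subseteq> noise_event n p q X lam \<sigma>s"
    "1 - real p powr (1 - A\<^sup>2 / 2) - (1 + exp 2) * exp (- (real n * real q) / 24)
       \<le> measure (noise_measure n q \<sigma>s) \<Omega>"
    using prob_noise_event[OF assms(4,10,11)] by blast
  have "A > 0" "sqrt (ln (real p) / real q) \<ge> 0"
    using less_trans[of 0 "sqrt 2" A] assms(2,10) by simp_all
  then have lam: "lam > 0"
    unfolding assms(11) using assms(1,3) by (simp add: add_pos_nonneg)
  note sqrt_lasso_estimate = sqrt_lasso_good_estimate[OF assms(6,16) lam assms(4) less_imp_le[OF assms(12)] assms(13)]
  note smooth_estimate = smooth_sqrt_lasso_good_estimate[OF assms(6,16) lam assms(4) less_imp_le[OF assms(12)] assms(13-15)]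
  show ?thesis
    using \<Omega> sqrt_lasso_estimate smooth_estimate by blast
qed

end
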